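(* Let $\mathcal G$ be a topological $2$-group, $X$ a topological space, $\mathcal U=\{U_i\}_{i\in I}$ an open cover of $X$ and $c=(\mathbf x,\mathbf e)$ a $\mathcal G$-valued Čech cocycle subordinate to $\mathcal U$. Then the functor $\pi_c\colon P_c\to\overline X$ defined below is a principal $\mathcal G$-bundle over $X$ admitting $\mathcal U$ as a trivializing cover.
   Context: Groupoids internal to a category are written $P=(P_1\rightrightarrows P_0)$ with source $s$, target $t$, and product $g*h$ (defined when $t(g)=s(h)$, meaning "first $g$ then $h$"). A topological $2$-space is a groupoid internal to topological spaces; a topological space $X$ gives $\overline X=(X\rightrightarrows X)$. A topological $2$-group $\mathcal G=(\mathcal G_1\rightrightarrows\mathcal G_0)$ is a groupoid internal to topological groups; then $g*h=h1_{t(g)^{-1}}g$, $\bar g=1_{s(g)}g^{-1}1_{t(g)}$. Let $\mathcal E=\mathrm{Ker}(s)\subset\mathcal G_1$, with $\mathcal G_0$ acting by ${}^xe=1_xe1_{x^{-1}}$. A $\mathcal G$-$2$-space is a topological $2$-space with a continuous strict right action functor of $\mathcal G$; a $\mathcal G$-functor is a $\mathcal G$-equivariant continuous functor; a $\mathcal G$-pseudo-inverse of a $\mathcal G$-functor $f\colon P\to Q$ is a $\mathcal G$-functor $g$ with $\mathcal G_0$-equivariant continuous natural isomorphisms $gf\Rightarrow\mathrm{id}_P$, $\mathrm{id}_Q\Rightarrow fg$; a $\mathcal G$-equivalence is a $\mathcal G$-functor having one. For a continuous functor $\pi\colon P\to\overline X$ from a $\mathcal G$-$2$-space, a trivializing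 chart is $(U,\psi,\phi,\varepsilon)$ with $U\subset X$ open, $\psi\colon P|_U\to\overline U\times\mathcal G$ a $\mathcal G$-equivalence, $\phi$ a $\mathcal G$-pseudo-inverse, $\varepsilon\colon\phi\psi\Rightarrow\mathrm{id}$ a $\mathcal G_0$-equivariant continuous natural isomorphism, with $\mathrm{pr}_1\psi=\pi|_U$ and $\pi|_U\phi=\mathrm{pr}_1$ ($P|_U$ the full subgroupoid on objects over $U$). An atlas is a family of trivializing charts whose $U$'s cover $X$; its cover is a trivializing cover. A principal $\mathcal G$-bundle over $X$ is such a $\pi$ admitting an atlas. Write $U_{i_1\cdots i_n}=U_{i_1}\cap\dots\cap U_{i_n}$. A $\mathcal G$-valued Čech cocycle subordinate to $\mathcal U$ is a pair of families of continuous maps $\mathbf x_{ij}\colon U_{ij}\to\mathcal G_0$, $\mathbf e_{ijk}\colon U_{ijk}\to\mathcal E$ with $t(\mathbf e_{ijk})\mathbf x_{ij}\mathbf x_{jk}=\mathbf x_{ik}$ on $U_{ijk}$ and $\mathbf e_{ikl}\mathbf e_{ijk}=\mathbf e_{ijl}\,{}^{\mathbf x_{ij}}\mathbf e_{jkl}$ on $U_{ijkl}$. The $2$-space $P_c$: $P_0=\coprod_iU_i\times\mathcal G_0$ (elements $(u,x)_i$), $P_1=\coprod_{i,j}U_{ij}\times\mathcal G_1$ (elements $(v,g)_{ij}$), $s((v,g)_{ij})=(v,s(g))_i$, $t((v,g)_{ij})=(v,\mathbf x_{ij}(v)^{-1}t(g))_j$, product $(v,g)_{ij}*(v,h)_{jk}=(v,\mathbf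 e_{ijk}(v)(g*(1_{\mathbf x_{ij}(v)}h)))_{ik}$, units $1_{(u,x)_i}=(u,\mathbf e_{iii}(u)^{-1}1_x)_{ii}$, inverses $\overline{(v,g)_{ij}}=(v,1_{\mathbf x_{ij}(v)^{-1}}\mathbf e_{iji}(v)^{-1}\mathbf e_{iii}(v)^{-1}\bar g)_{ji}$; right action $(u,x)_i\cdot y=(u,xy)_i$, $(v,g)_{ij}\cdot h=(v,gh)_{ij}$; and $\pi_c((u,x)_i)=u$, $\pi_c((v,g)_{ij})=v$. *)

theory Defs
  imports "HOL-Analysis.Analysis"
begin

section \<open>Topological 2-spaces (groupoids internal to Top)\<close>

text \<open>Objects and arrows carry topologies; cmp g h means first g then h
  (defined when tgt g = src h).\<close>

record ('o, 'a) gpd =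
  obT :: "'o topology"
  arT :: "'a topology"
  src :: "'a \<Rightarrow> 'o"
  tgt :: "'a \<Rightarrow> 'o"
  cmp :: "'a \<Rightarrow> 'a \<Rightarrow> 'a"
  idn :: "'o \<Rightarrow> 'a"
  inv :: "'a \<Rightarrow> 'a"

definition composable :: "('o, 'a, 'm) gpd_scheme \<Rightarrow> ('a \<times> 'a) set" where
  "composable P = {(g, h). g \<in> topspace (arT P) \<and> h \<in> topspace (arT P) \<and> tgt P g = src P h}"

definition topological_2space :: "('o, 'a, 'm) gpd_scheme \<Rightarrow> bool" where
  "topological_2space P \<longleftrightarrow>
     continuous_map (arT P) (obT P) (src P) \<and>
     continuous_map (arT P) (obT P) (tgt P) \<and>
     continuous_map (obT P) (arT P) (idn P) \<and>
     continuous_map (arT P) (arT P) (inv P) \<and>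
     continuous_map (subtopology (prod_topology (arT P) (arT P)) (composable P)) (arT P)
        (\<lambda>(g, h). cmp P g h) \<and>
     (\<forall>(g, h) \<in> composable P. src P (cmp P g h) = src P g \<and> tgt P (cmp P g h) = tgt P h) \<and>
     (\<forall>(g, h) \<in> composable P. \<forall>k \<in> topspace (arT P). tgt P h = src P k \<longrightarrow>
         cmp P (cmp P g h) k = cmp P g (cmp P h k)) \<and>
     (\<forall>x \<in> topspace (obT P). src P (idn P x) = x \<and> tgt P (idn P x) = x) \<and>
     (\<forall>g \<in> topspace (arT P). cmp P (idn P (src P g)) g = g \<and> cmp P g (idn P (tgt P g)) = g) \<and>
     (\<forall>g \<in> topspace (arT P). src P (inv P g) = tgt P g \<and> tgt P (inv P g) = src P g \<and>
         cmp P g (inv P g) = idn P (src P g) \<and> cmp P (inv P g) g = idn P (tgt P g))"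

definition disc :: "'x topology \<Rightarrow> ('x, 'x) gpd" where
  "disc X = \<lparr>obT = X, arT = X, src = id, tgt = id, cmp = (\<lambda>a b. a), idn = id, inv = id\<rparr>"

definition cont_functor :: "('o, 'a, 'm) gpd_scheme \<Rightarrow> ('p, 'b, 'n) gpd_scheme \<Rightarrow>
    ('o \<Rightarrow> 'p) \<Rightarrow> ('a \<Rightarrow> 'b) \<Rightarrow> bool" where
  "cont_functor P Q F0 F1 \<longleftrightarrow>
     continuous_map (obT P) (obT Q) F0 \<and> continuous_map (arT P) (arT Q) F1 \<and>
     (\<forall>g \<in> topspace (arT P). src Q (F1 g) = F0 (src P g) \<and> tgt Q (F1 g) = F0 (tgt P g)) \<and>
     (\<forall>(g, h) \<in> composable P. F1 (cmp P g h) = cmp Q (F1 g) (F1 h)) \<and>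
     (\<forall>x \<in> topspace (obT P). F1 (idn P x) = idn Q (F0 x))"

text \<open>Continuous natural transformation alpha from (F0,F1) to (H0,H1); all of
  these are natural isomorphisms since the target is a groupoid.\<close>

definition cont_nat_trans :: "('o, 'a, 'm) gpd_scheme \<Rightarrow> ('p, 'b, 'n) gpd_scheme \<Rightarrow>
    ('o \<Rightarrow> 'p) \<Rightarrow> ('a \<Rightarrow> 'b) \<Rightarrow> ('o \<Rightarrow> 'p) \<Rightarrow> ('a \<Rightarrow> 'b) \<Rightarrow> ('o \<Rightarrow> 'b) \<Rightarrow> bool" where
  "cont_nat_trans P Q F0 F1 H0 H1 \<alpha> \<longleftrightarrow>
     continuous_map (obT P) (arT Q) \<alpha> \<and>
     (\<forall>x \<in> topspace (obT P). src Q (\<alpha> x) = F0 x \<and> tgt Q (\<alpha> x) = H0 x) \<and>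
     (\<forall>g \<in> topspace (arT P). cmp Q (F1 g) (\<alpha> (tgt P g)) = cmp Q (\<alpha> (src P g)) (H1 g))"

section \<open>Topological groups and topological 2-groups\<close>

definition topological_group :: "'g topology \<Rightarrow> ('g \<Rightarrow> 'g \<Rightarrow> 'g) \<Rightarrow> ('g \<Rightarrow> 'g) \<Rightarrow> 'g \<Rightarrow> bool" where
  "topological_group T m i e \<longleftrightarrow>
     e \<in> topspace T \<and>
     continuous_map (prod_topology T T) T (\<lambda>(x, y). m x y) \<and>
     continuous_map T T i \<and>
     (\<forall>x \<in> topspace T. \<forall>y \<in> topspace T. \<forall>z \<in> topspace T. m (m x y) z = m x (m y z)) \<and>
     (\<forall>x \<in> topspace T. m e x = x \<and> m x e = x \<and> m (i x) x = e \<and> m x (i x) = e)"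

definition group_hom :: "'g topology \<Rightarrow> ('g \<Rightarrow> 'g \<Rightarrow> 'g) \<Rightarrow> ('h \<Rightarrow> 'h \<Rightarrow> 'h) \<Rightarrow> ('g \<Rightarrow> 'h) \<Rightarrow> bool" where
  "group_hom T m n f \<longleftrightarrow> (\<forall>x \<in> topspace T. \<forall>y \<in> topspace T. f (m x y) = n (f x) (f y))"

record ('o, 'a) twogrp = "('o, 'a) gpd" +
  omul :: "'o \<Rightarrow> 'o \<Rightarrow> 'o"
  oinv :: "'o \<Rightarrow> 'o"
  oone :: "'o"
  amul :: "'a \<Rightarrow> 'a \<Rightarrow> 'a"
  ainv :: "'a \<Rightarrow> 'a"
  aone :: "'a"

definition topological_2group :: "('o, 'a, 'm) twogrp_scheme \<Rightarrow> bool" where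
  "topological_2group G \<longleftrightarrow>
     topological_2space G \<and>
     topological_group (obT G) (omul G) (oinv G) (oone G) \<and>
     topological_group (arT G) (amul G) (ainv G) (aone G) \<and>
     group_hom (arT G) (amul G) (omul G) (src G) \<and>
     group_hom (arT G) (amul G) (omul G) (tgt G) \<and>
     group_hom (obT G) (omul G) (amul G) (idn G) \<and>
     group_hom (arT G) (amul G) (amul G) (inv G) \<and>
     (\<forall>(g, h) \<in> composable G. \<forall>(g', h') \<in> composable G.
        cmp G (amul G g g') (amul G h h') = amul G (cmp G g h) (cmp G g' h'))"

definition kerS :: "('o, 'a, 'm) twogrp_scheme \<Rightarrow> 'a set" where
  "kerS G = {e \<in> topspace (arT G). src G e = oone G}"

definition conj_act :: "('o, 'a, 'm) twogrp_scheme \<Rightarrow> 'o \<Rightarrow> 'a \<Rightarrow> 'a" where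
  "conj_act G x e = amul G (amul G (idn G x) e) (idn G (oinv G x))"

section \<open>G-2-spaces, G-functors, G-equivalences\<close>

record ('o, 'a, 'g0, 'g1) g2space = "('o, 'a) gpd" +
  actO :: "'o \<Rightarrow> 'g0 \<Rightarrow> 'o"
  actA :: "'a \<Rightarrow> 'g1 \<Rightarrow> 'a"

definition G_2space :: "('g0, 'g1, 'm) twogrp_scheme \<Rightarrow> ('o, 'a, 'g0, 'g1, 'n) g2space_scheme \<Rightarrow> bool" where
  "G_2space G P \<longleftrightarrow>
     topological_2space P \<and>
     continuous_map (prod_topology (obT P) (obT G)) (obT P) (\<lambda>(p, x). actO P p x) \<and>
     continuous_map (prod_topology (arT P) (arT G)) (arT P) (\<lambda>(a, g). actA P a g) \<and>
     (\<forall>a \<in> topspace (arT P). \<forall>g \<in> topspace (arT G).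
        src P (actA P a g) = actO P (src P a) (src G g) \<and>
        tgt P (actA P a g) = actO P (tgt P a) (tgt G g)) \<and>
     (\<forall>p \<in> topspace (obT P). \<forall>x \<in> topspace (obT G).
        actA P (idn P p) (idn G x) = idn P (actO P p x)) \<and>
     (\<forall>(a, b) \<in> composable P. \<forall>(g, h) \<in> composable G.
        actA P (cmp P a b) (cmp G g h) = cmp P (actA P a g) (actA P b h)) \<and>
     (\<forall>p \<in> topspace (obT P). actO P p (oone G) = p \<and>
        (\<forall>x \<in> topspace (obT G). \<forall>y \<in> topspace (obT G).
           actO P (actO P p x) y = actO P p (omul G x y))) \<and>
     (\<forall>a \<in> topspace (arT P). actA P a (aone G) = a \<and>
        (\<forall>g \<in> topspace (arT G). \<forall>h \<in> topspace (arT G).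
           actA P (actA P a g) h = actA P a (amul G g h)))"

definition G_functor :: "('g0, 'g1, 'm) twogrp_scheme \<Rightarrow> ('o, 'a, 'g0, 'g1, 'n) g2space_scheme \<Rightarrow>
    ('p, 'b, 'g0, 'g1, 'k) g2space_scheme \<Rightarrow> ('o \<Rightarrow> 'p) \<Rightarrow> ('a \<Rightarrow> 'b) \<Rightarrow> bool" where
  "G_functor G P Q F0 F1 \<longleftrightarrow>
     cont_functor P Q F0 F1 \<and>
     (\<forall>p \<in> topspace (obT P). \<forall>x \<in> topspace (obT G). F0 (actO P p x) = actO Q (F0 p) x) \<and>
     (\<forall>a \<in> topspace (arT P). \<forall>g \<in> topspace (arT G). F1 (actA P a g) = actA Q (F1 a) g)"

definition G0_nat_iso :: "('g0, 'g1, 'm) twogrp_scheme \<Rightarrow> ('o, 'a, 'g0, 'g1, 'n) g2space_scheme \<Rightarrow>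
    ('p, 'b, 'g0, 'g1, 'k) g2space_scheme \<Rightarrow>
    ('o \<Rightarrow> 'p) \<Rightarrow> ('a \<Rightarrow> 'b) \<Rightarrow> ('o \<Rightarrow> 'p) \<Rightarrow> ('a \<Rightarrow> 'b) \<Rightarrow> ('o \<Rightarrow> 'b) \<Rightarrow> bool" where
  "G0_nat_iso G P Q F0 F1 H0 H1 \<alpha> \<longleftrightarrow>
     cont_nat_trans P Q F0 F1 H0 H1 \<alpha> \<and>
     (\<forall>p \<in> topspace (obT P). \<forall>x \<in> topspace (obT G). \<alpha> (actO P p x) = actA Q (\<alpha> p) (idn G x))"

definition G_pseudo_inverse :: "('g0, 'g1, 'm) twogrp_scheme \<Rightarrow> ('o, 'a, 'g0, 'g1, 'n) g2space_scheme \<Rightarrow>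
    ('p, 'b, 'g0, 'g1, 'k) g2space_scheme \<Rightarrow> ('o \<Rightarrow> 'p) \<Rightarrow> ('a \<Rightarrow> 'b) \<Rightarrow>
    ('p \<Rightarrow> 'o) \<Rightarrow> ('b \<Rightarrow> 'a) \<Rightarrow> bool" where
  "G_pseudo_inverse G P Q f0 f1 g0 g1 \<longleftrightarrow>
     G_functor G Q P g0 g1 \<and>
     (\<exists>\<alpha>. G0_nat_iso G P P (g0 \<circ> f0) (g1 \<circ> f1) id id \<alpha>) \<and>
     (\<exists>\<beta>. G0_nat_iso G Q Q id id (f0 \<circ> g0) (f1 \<circ> g1) \<beta>)"

definition G_equivalence :: "('g0, 'g1, 'm) twogrp_scheme \<Rightarrow> ('o, 'a, 'g0, 'g1, 'n) g2space_scheme \<Rightarrow>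
    ('p, 'b, 'g0, 'g1, 'k) g2space_scheme \<Rightarrow> ('o \<Rightarrow> 'p) \<Rightarrow> ('a \<Rightarrow> 'b) \<Rightarrow> bool" where
  "G_equivalence G P Q f0 f1 \<longleftrightarrow>
     G_functor G P Q f0 f1 \<and>
     (\<exists>(g0 :: 'p \<Rightarrow> 'o) (g1 :: 'b \<Rightarrow> 'a). G_pseudo_inverse G P Q f0 f1 g0 g1)"

section \<open>Principal G-bundles\<close>

definition restr :: "('o, 'a, 'g0, 'g1, 'n) g2space_scheme \<Rightarrow> ('o \<Rightarrow> 'x) \<Rightarrow> 'x set \<Rightarrow>
    ('o, 'a, 'g0, 'g1, 'n) g2space_scheme" where
  "restr P \<pi>0 U = P\<lparr>obT := subtopology (obT P) {p. \<pi>0 p \<in> U},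
                    arT := subtopology (arT P) {a. \<pi>0 (src P a) \<in> U \<and> \<pi>0 (tgt P a) \<in> U}\<rparr>"

definition triv :: "'x topology \<Rightarrow> 'x set \<Rightarrow> ('g0, 'g1, 'm) twogrp_scheme \<Rightarrow>
    ('x \<times> 'g0, 'x \<times> 'g1, 'g0, 'g1) g2space" where
  "triv X U G = \<lparr>obT = prod_topology (subtopology X U) (obT G),
                arT = prod_topology (subtopology X U) (arT G),
                src = (\<lambda>(u, g). (u, src G g)),
                tgt = (\<lambda>(u, g). (u, tgt G g)),
                cmp = (\<lambda>(u, g) (v, h). (u, cmp G g h)),
                idn = (\<lambda>(u, x). (u, idn G x)),
                inv = (\<lambda>(u, g). (u, inv G g)),
                actO = (\<lambda>(u, x) y. (u, omul G x y)),
                actA = (\<lambda>(u, g) h. (u, amul G g h))\<rparr>"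

definition trivializing_chart :: "('g0, 'g1, 'm) twogrp_scheme \<Rightarrow> 'x topology \<Rightarrow>
    ('o, 'a, 'g0, 'g1, 'n) g2space_scheme \<Rightarrow> ('o \<Rightarrow> 'x) \<Rightarrow> ('a \<Rightarrow> 'x) \<Rightarrow> 'x set \<Rightarrow>
    ('o \<Rightarrow> 'x \<times> 'g0) \<Rightarrow> ('a \<Rightarrow> 'x \<times> 'g1) \<Rightarrow> ('x \<times> 'g0 \<Rightarrow> 'o) \<Rightarrow> ('x \<times> 'g1 \<Rightarrow> 'a) \<Rightarrow>
    ('o \<Rightarrow> 'a) \<Rightarrow> bool" where
  "trivializing_chart G X P \<pi>0 \<pi>1 U \<psi>0 \<psi>1 \<phi>0 \<phi>1 \<epsilon> \<longleftrightarrow>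
     openin X U \<and>
     G_equivalence G (restr P \<pi>0 U) (triv X U G) \<psi>0 \<psi>1 \<and>
     G_pseudo_inverse G (restr P \<pi>0 U) (triv X U G) \<psi>0 \<psi>1 \<phi>0 \<phi>1 \<and>
     G0_nat_iso G (restr P \<pi>0 U) (restr P \<pi>0 U) (\<phi>0 \<circ> \<psi>0) (\<phi>1 \<circ> \<psi>1) id id \<epsilon> \<and>
     (\<forall>p \<in> topspace (obT (restr P \<pi>0 U)). fst (\<psi>0 p) = \<pi>0 p) \<and>
     (\<forall>a \<in> topspace (arT (restr P \<pi>0 U)). fst (\<psi>1 a) = \<pi>1 a) \<and>
     (\<forall>q \<in> topspace (obT (triv X U G)). \<pi>0 (\<phi>0 q) = fst q) \<and>
     (\<forall>b \<in> topspace (arT (triv X U G)). \<pi>1 (\<phi>1 b) = fst b)"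

definition trivializing_cover :: "('g0, 'g1, 'm) twogrp_scheme \<Rightarrow> 'x topology \<Rightarrow>
    ('o, 'a, 'g0, 'g1, 'n) g2space_scheme \<Rightarrow> ('o \<Rightarrow> 'x) \<Rightarrow> ('a \<Rightarrow> 'x) \<Rightarrow> 'x set set \<Rightarrow> bool" where
  "trivializing_cover G X P \<pi>0 \<pi>1 \<V> \<longleftrightarrow>
     \<Union>\<V> = topspace X \<and>
     (\<forall>V \<in> \<V>. \<exists>\<psi>0 \<psi>1 \<phi>0 \<phi>1 \<epsilon>. trivializing_chart G X P \<pi>0 \<pi>1 V \<psi>0 \<psi>1 \<phi>0 \<phi>1 \<epsilon>)"

definition principal_bundle :: "('g0, 'g1, 'm) twogrp_scheme \<Rightarrow> 'x topology \<Rightarrow>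
    ('o, 'a, 'g0, 'g1, 'n) g2space_scheme \<Rightarrow> ('o \<Rightarrow> 'x) \<Rightarrow> ('a \<Rightarrow> 'x) \<Rightarrow> bool" where
  "principal_bundle G X P \<pi>0 \<pi>1 \<longleftrightarrow>
     G_2space G P \<and> cont_functor P (disc X) \<pi>0 \<pi>1 \<and>
     (\<exists>\<V>. trivializing_cover G X P \<pi>0 \<pi>1 \<V>)"

section \<open>Cech cocycles and the 2-space P_c\<close>

definition cech_cocycle :: "('g0, 'g1, 'm) twogrp_scheme \<Rightarrow> 'x topology \<Rightarrow> 'i set \<Rightarrow> ('i \<Rightarrow> 'x set) \<Rightarrow>
    ('i \<Rightarrow> 'i \<Rightarrow> 'x \<Rightarrow> 'g0) \<Rightarrow> ('i \<Rightarrow> 'i \<Rightarrow> 'i \<Rightarrow> 'x \<Rightarrow> 'g1) \<Rightarrow> bool" where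
  "cech_cocycle G X I U xx ee \<longleftrightarrow>
     (\<forall>i \<in> I. \<forall>j \<in> I. continuous_map (subtopology X (U i \<inter> U j)) (obT G) (xx i j)) \<and>
     (\<forall>i \<in> I. \<forall>j \<in> I. \<forall>k \<in> I.
        continuous_map (subtopology X (U i \<inter> U j \<inter> U k)) (subtopology (arT G) (kerS G)) (ee i j k)) \<and>
     (\<forall>i \<in> I. \<forall>j \<in> I. \<forall>k \<in> I. \<forall>v \<in> topspace X \<inter> U i \<inter> U j \<inter> U k.
        omul G (omul G (tgt G (ee i j k v)) (xx i j v)) (xx j k v) = xx i k v) \<and>
     (\<forall>i \<in> I. \<forall>j \<in> I. \<forall>k \<in> I. \<forall>l \<in> I. \<forall>v \<in> topspace X \<inter> U i \<inter> U j \<inter> U k \<inter> U l.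
        amul G (ee i k l v) (ee i j k v) = amul G (ee i j l v) (conj_act G (xx i j v) (ee j k l v)))"

definition Pc :: "('g0, 'g1, 'm) twogrp_scheme \<Rightarrow> 'x topology \<Rightarrow> 'i set \<Rightarrow> ('i \<Rightarrow> 'x set) \<Rightarrow>
    ('i \<Rightarrow> 'i \<Rightarrow> 'x \<Rightarrow> 'g0) \<Rightarrow> ('i \<Rightarrow> 'i \<Rightarrow> 'i \<Rightarrow> 'x \<Rightarrow> 'g1) \<Rightarrow>
    ('i \<times> 'x \<times> 'g0, ('i \<times> 'i) \<times> 'x \<times> 'g1, 'g0, 'g1) g2space" where
  "Pc G X I U xx ee = \<lparr>
     obT = sum_topology (\<lambda>i. prod_topology (subtopology X (U i)) (obT G)) I,
     arT = sum_topology (\<lambda>(i, j). prod_topology (subtopology X (U i \<inter> U j)) (arT G)) (I \<times> I),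
     src = (\<lambda>((i, j), (v, g)). (i, (v, src G g))),
     tgt = (\<lambda>((i, j), (v, g)). (j, (v, omul G (oinv G (xx i j v)) (tgt G g)))),
     cmp = (\<lambda>((i, j), (v, g)) ((j', k), (v', h)).
              ((i, k), (v, amul G (ee i j k v) (cmp G g (amul G (idn G (xx i j v)) h))))),
     idn = (\<lambda>(i, (u, x)). ((i, i), (u, amul G (ainv G (ee i i i u)) (idn G x)))),
     inv = (\<lambda>((i, j), (v, g)). ((j, i), (v,
              amul G (amul G (amul G (idn G (oinv G (xx i j v))) (ainv G (ee i j i v)))
                              (ainv G (ee i i i v))) (inv G g)))),
     actO = (\<lambda>(i, (u, x)) y. (i, (u, omul G x y))),
     actA = (\<lambda>((i, j), (v, g)) h. ((i, j), (v, amul G g h)))\<rparr>"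

definition \<pi>c0 :: "'i \<times> 'x \<times> 'g0 \<Rightarrow> 'x" where
  "\<pi>c0 = (\<lambda>(i, (u, x)). u)"

definition \<pi>c1 :: "('i \<times> 'i) \<times> 'x \<times> 'g1 \<Rightarrow> 'x" where
  "\<pi>c1 = (\<lambda>((i, j), (v, g)). v)"

end

theory Submission
  imports Defs
begin

text \<open>P_c is glued from the trivial pieces U_i \<times> G along the transition functions x_ij, the arrows
  e_ijk \<in> Ker s serving as coherence data. In a 2-group, composition is determined by the group
  structure, g * h = g 1_t(g)^-1 h, and arrows in Ker s satisfy the Peiffer identity; with these two
  facts every groupoid axiom of P_c reduces to one of the two cocycle identities or to one of their
  degenerate instances x_ii = t(e_iii)^-1, e_iij = e_iii and e_ijj = 1_x_ij e_jjj 1_x_ij^-1.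
  Continuity is checked sheet by sheet, the sheets being open in the sum topology. Over U_i the
  functor (u, x)_j \<mapsto> (u, x_ij(u) x), (v, g)_jk \<mapsto> (v, e_ijk(v) 1_x_ij(v) g) is a G-equivalence
  onto U_i \<times> G, with pseudo-inverse the inclusion of the i-th sheet twisted by e_iii^-1 on arrows.\<close>

section \<open>Continuity on sum topologies\<close>

lemma openin_sum_component_preimage:
  assumes h: "continuous_map Z (sum_topology S I) h"
  shows "openin Z {z \<in> topspace Z. fst (h z) = i}"
proof -
  let ?slice = "Sigma I (\<lambda>j. if j = i then topspace (S j) else {})"
  have slice_iff: "h z \<in> ?slice \<longleftrightarrow> fst (h z) = i" if "z \<in> topspace Z" for z
  proof -
    have "h z \<in> topspace (sum_topology S I)"
      using continuous_map_funspace[OF h] that by blast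
    then show ?thesis
      by (cases "h z") auto
  qed
  then have "{z \<in> topspace Z. fst (h z) = i} = {z \<in> topspace Z. h z \<in> ?slice}"
    by (intro Collect_cong) (metis slice_iff)
  moreover have "openin (sum_topology S I) ?slice"
    by (simp add: openin_disjoint_union)
  ultimately show ?thesis
    using openin_continuous_map_preimage[OF h] by simp
qed

lemma continuous_map_sum_slices:
  assumes h: "continuous_map Z (sum_topology S I) h"
    and slices: "\<And>i. i \<in> I \<Longrightarrow> continuous_map (subtopology Z {z. fst (h z) = i}) Y f"
  shows "continuous_map Z Y f"
proof (rule pasting_lemma)
  show "openin Z {z \<in> topspace Z. fst (h z) = i}" for i
    by (rule openin_sum_component_preimage[OF h])
  show "continuous_map (subtopology Z {z \<in> topspace Z. fst (h z) = i}) Y f" if "i \<in> I" for i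
    using slices[OF that] by (simp add: Collect_conj_eq subtopology_restrict)
  show "\<exists>j. j \<in> I \<and> z \<in> {z \<in> topspace Z. fst (h z) = j} \<and> f z = f z" if "z \<in> topspace Z" for z
    using continuous_map_image_subset_topspace[OF h] that by force
qed auto

lemma continuous_map_from_sum_topology:
  assumes "\<And>i. i \<in> I \<Longrightarrow> continuous_map (S i) Y (\<lambda>x. f (i, x))"
  shows "continuous_map (sum_topology S I) Y f"
  unfolding continuous_map_def
proof (intro conjI allI impI)
  show "f \<in> topspace (sum_topology S I) \<rightarrow> topspace Y"
    using assms continuous_map_funspace by fastforce
  fix V assume V: "openin Y V"
  have "{x. (i, x) \<in> {p \<in> topspace (sum_topology S I). f p \<in> V}} = {x \<in> topspace (S i). f (i, x) \<in> V}"
    if "i \<in> I" for i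
    using that by auto
  then show "openin (sum_topology S I) {p \<in> topspace (sum_topology S I). f p \<in> V}"
    using assms V by (auto simp: openin_sum_topology continuous_map_def)
qed

lemma continuous_map_into_sum_topology:
  "i \<in> I \<Longrightarrow> continuous_map Z (S i) f \<Longrightarrow> continuous_map Z (sum_topology S I) (\<lambda>z. (i, f z))"
  using continuous_map_compose[OF _ continuous_map_component_injection] by (simp add: o_def)

lemma continuous_map_prod_subtopology_incl:
  "continuous_map (prod_topology (subtopology X S) Y) (prod_topology X Y) (\<lambda>p. p)"
  unfolding prod_topology_subtopology
  using continuous_map_from_subtopology[OF continuous_map_id] by (simp add: id_def)

lemma continuous_map_fst_prod_subtopology: "continuous_map (prod_topology (subtopology X S) Y) X fst"
  by (rule continuous_map_into_fulltopology[OF continuous_map_fst])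

section \<open>Topological groups and 2-groups\<close>

locale topological_group_on =
  fixes T :: "'g topology" and mult :: "'g \<Rightarrow> 'g \<Rightarrow> 'g" and inverse :: "'g \<Rightarrow> 'g" and e :: 'g
  assumes topological_group: "topological_group T mult inverse e"
begin

lemma continuous_map_mult:
  assumes "continuous_map Z T f" "continuous_map Z T g"
  shows "continuous_map Z T (\<lambda>z. mult (f z) (g z))"
proof -
  have "continuous_map (prod_topology T T) T (\<lambda>(x, y). mult x y)"
    using topological_group by (simp add: topological_group_def)
  from continuous_map_compose[OF continuous_map_pairedI[OF assms] this] show ?thesis
    by (simp add: o_def)
qed

lemma continuous_map_inverse: "continuous_map Z T f \<Longrightarrow> continuous_map Z T (\<lambda>z. inverse (f z))"
  using continuous_map_compose[of Z T f T inverse] topological_group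
  by (simp add: topological_group_def o_def)

lemma closed [simp]:
  "e \<in> topspace T"
  "x \<in> topspace T \<Longrightarrow> y \<in> topspace T \<Longrightarrow> mult x y \<in> topspace T"
  "x \<in> topspace T \<Longrightarrow> inverse x \<in> topspace T"
proof -
  have "continuous_map (prod_topology T T) T (\<lambda>(x, y). mult x y)" "continuous_map T T inverse"
    and "e \<in> topspace T"
    using topological_group by (simp_all add: topological_group_def)
  then show "e \<in> topspace T"
    and "x \<in> topspace T \<Longrightarrow> y \<in> topspace T \<Longrightarrow> mult x y \<in> topspace T"
    and "x \<in> topspace T \<Longrightarrow> inverse x \<in> topspace T"
    using funcset_mem[OF continuous_map_funspace, of "prod_topology T T" T "\<lambda>(x, y). mult x y" "(x, y)"]
      funcset_mem[OF continuous_map_funspace, of T T inverse x] by auto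
qed

lemma group_laws [simp]:
  "x \<in> topspace T \<Longrightarrow> y \<in> topspace T \<Longrightarrow> z \<in> topspace T \<Longrightarrow> mult (mult x y) z = mult x (mult y z)"
  "x \<in> topspace T \<Longrightarrow> mult e x = x"
  "x \<in> topspace T \<Longrightarrow> mult x e = x"
  "x \<in> topspace T \<Longrightarrow> mult (inverse x) x = e"
  "x \<in> topspace T \<Longrightarrow> mult x (inverse x) = e"
  using topological_group by (auto simp: topological_group_def)

lemma inverse_cancel [simp]:
  "x \<in> topspace T \<Longrightarrow> y \<in> topspace T \<Longrightarrow> mult (inverse x) (mult x y) = y"
  "x \<in> topspace T \<Longrightarrow> y \<in> topspace T \<Longrightarrow> mult x (mult (inverse x) y) = y"
  by (metis group_laws(1,2,4) closed(3), metis group_laws(1,2,5) closed(3))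

lemma mult_left_cancel [simp]:
  "a \<in> topspace T \<Longrightarrow> b \<in> topspace T \<Longrightarrow> c \<in> topspace T \<Longrightarrow> mult a b = mult a c \<longleftrightarrow> b = c"
  by (metis inverse_cancel(1))

lemma mult_right_cancel:
  "a \<in> topspace T \<Longrightarrow> b \<in> topspace T \<Longrightarrow> c \<in> topspace T \<Longrightarrow> mult b a = mult c a \<Longrightarrow> b = c"
  by (metis group_laws(1,3,5) closed(3))

lemma inverse_inverse [simp]: "x \<in> topspace T \<Longrightarrow> inverse (inverse x) = x"
  by (rule mult_right_cancel[of "inverse x"]) simp_all

lemma inverse_unit [simp]: "inverse e = e"
  by (rule mult_left_cancel[THEN iffD1, of e]) simp_all

lemma inverse_mult [simp]:
  "x \<in> topspace T \<Longrightarrow> y \<in> topspace T \<Longrightarrow> inverse (mult x y) = mult (inverse y) (inverse x)"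
  by (rule mult_left_cancel[THEN iffD1, of "mult x y"]) simp_all

lemma group_hom_unit_inverse:
  assumes "topological_group T' mult' inverse' e'" and "group_hom T mult mult' f"
    and "\<And>x. x \<in> topspace T \<Longrightarrow> f x \<in> topspace T'"
  shows "f e = e'" "x \<in> topspace T \<Longrightarrow> f (inverse x) = inverse' (f x)"
proof -
  interpret T': topological_group_on T' mult' inverse' e' by unfold_locales fact
  have hom: "f (mult x y) = mult' (f x) (f y)" if "x \<in> topspace T" "y \<in> topspace T" for x y
    using assms(2) that by (simp add: group_hom_def)
  have fe: "f e \<in> topspace T'"
    using assms(3) by simp
  have "mult' (f e) (f e) = f (mult e e)"
    by (rule hom[symmetric]) simp_all
  also have "\<dots> = mult' (f e) e'"
    using fe by simp
  finally show unit: "f e = e'"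
    by (rule iffD1[OF T'.mult_left_cancel[OF fe fe T'.closed(1)]])
  assume x: "x \<in> topspace T"
  have fx: "f x \<in> topspace T'" "f (inverse x) \<in> topspace T'"
    using assms(3) x by simp_all
  have "mult' (f x) (f (inverse x)) = f (mult x (inverse x))"
    using x by (intro hom[symmetric]) simp_all
  also have "\<dots> = mult' (f x) (inverse' (f x))"
    using x unit fx by simp
  finally show "f (inverse x) = inverse' (f x)"
    by (rule iffD1[OF T'.mult_left_cancel[OF fx(1) fx(2) T'.closed(3)[OF fx(1)]]])
qed

end

locale two_group =
  fixes G :: "('g0, 'g1, 'm) twogrp_scheme"
  assumes topological_2group: "topological_2group G"
begin

abbreviation "G0 \<equiv> topspace (obT G)"
abbreviation "G1 \<equiv> topspace (arT G)"

sublocale arr: topological_group_on "arT G" "amul G" "ainv G" "aone G"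
  using topological_2group by unfold_locales (simp add: topological_2group_def)

sublocale obj: topological_group_on "obT G" "omul G" "oinv G" "oone G"
  using topological_2group by unfold_locales (simp add: topological_2group_def)

lemma topological_2space: "topological_2space G"
  using topological_2group by (simp add: topological_2group_def)

lemma continuous_map_src: "continuous_map Z (arT G) f \<Longrightarrow> continuous_map Z (obT G) (\<lambda>z. src G (f z))"
  using continuous_map_compose[of Z "arT G" f "obT G" "src G"] topological_2space
  by (simp add: topological_2space_def o_def)

lemma continuous_map_tgt: "continuous_map Z (arT G) f \<Longrightarrow> continuous_map Z (obT G) (\<lambda>z. tgt G (f z))"
  using continuous_map_compose[of Z "arT G" f "obT G" "tgt G"] topological_2space
  by (simp add: topological_2space_def o_def)

lemma continuous_map_idn: "continuous_map Z (obT G) f \<Longrightarrow> continuous_map Z (arT G) (\<lambda>z. idn G (f z))"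
  using continuous_map_compose[of Z "obT G" f "arT G" "idn G"] topological_2space
  by (simp add: topological_2space_def o_def)

lemma continuous_map_inv: "continuous_map Z (arT G) f \<Longrightarrow> continuous_map Z (arT G) (\<lambda>z. inv G (f z))"
  using continuous_map_compose[of Z "arT G" f "arT G" "inv G"] topological_2space
  by (simp add: topological_2space_def o_def)

lemma continuous_map_cmp:
  assumes f: "continuous_map Z (arT G) f" and g: "continuous_map Z (arT G) g"
    and tgt_src: "\<And>z. z \<in> topspace Z \<Longrightarrow> tgt G (f z) = src G (g z)"
  shows "continuous_map Z (arT G) (\<lambda>z. cmp G (f z) (g z))"
proof -
  have pair: "continuous_map Z (subtopology (prod_topology (arT G) (arT G)) (composable G)) (\<lambda>z. (f z, g z))"
    using f g tgt_src continuous_map_funspace[OF f] continuous_map_funspace[OF g]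
    by (auto intro!: continuous_map_into_subtopology continuous_map_pairedI simp: composable_def)
  have "continuous_map (subtopology (prod_topology (arT G) (arT G)) (composable G)) (arT G)
      (\<lambda>(g, h). cmp G g h)"
    using topological_2space by (simp add: topological_2space_def)
  from continuous_map_compose[OF pair this] show ?thesis
    by (simp add: o_def)
qed

lemmas continuous_map_two_group =
  arr.continuous_map_mult obj.continuous_map_mult arr.continuous_map_inverse obj.continuous_map_inverse
  continuous_map_src continuous_map_tgt continuous_map_idn continuous_map_inv

lemma structure_maps_closed [simp]:
  "g \<in> G1 \<Longrightarrow> src G g \<in> G0" "g \<in> G1 \<Longrightarrow> tgt G g \<in> G0"
  "x \<in> G0 \<Longrightarrow> idn G x \<in> G1" "g \<in> G1 \<Longrightarrow> inv G g \<in> G1"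
proof -
  have "continuous_map (arT G) (obT G) (src G)" "continuous_map (arT G) (obT G) (tgt G)"
    "continuous_map (obT G) (arT G) (idn G)" "continuous_map (arT G) (arT G) (inv G)"
    using topological_2space by (simp_all add: topological_2space_def)
  from this[THEN continuous_map_funspace]
  show "g \<in> G1 \<Longrightarrow> src G g \<in> G0" "g \<in> G1 \<Longrightarrow> tgt G g \<in> G0"
    "x \<in> G0 \<Longrightarrow> idn G x \<in> G1" "g \<in> G1 \<Longrightarrow> inv G g \<in> G1"
    by (simp_all add: Pi_iff)
qed

lemma structure_maps_mult [simp]:
  "x \<in> G1 \<Longrightarrow> y \<in> G1 \<Longrightarrow> src G (amul G x y) = omul G (src G x) (src G y)"
  "x \<in> G1 \<Longrightarrow> y \<in> G1 \<Longrightarrow> tgt G (amul G x y) = omul G (tgt G x) (tgt G y)"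
  "a \<in> G0 \<Longrightarrow> b \<in> G0 \<Longrightarrow> idn G (omul G a b) = amul G (idn G a) (idn G b)"
  using topological_2group by (auto simp: topological_2group_def group_hom_def)

lemma structure_maps_unit_inverse [simp]:
  "src G (aone G) = oone G" "x \<in> G1 \<Longrightarrow> src G (ainv G x) = oinv G (src G x)"
  "tgt G (aone G) = oone G" "x \<in> G1 \<Longrightarrow> tgt G (ainv G x) = oinv G (tgt G x)"
  "idn G (oone G) = aone G" "y \<in> G0 \<Longrightarrow> idn G (oinv G y) = ainv G (idn G y)"
proof -
  have hom: "group_hom (arT G) (amul G) (omul G) (src G)" "group_hom (arT G) (amul G) (omul G) (tgt G)"
    "group_hom (obT G) (omul G) (amul G) (idn G)"
    using topological_2group by (simp_all add: topological_2group_def)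
  note src = arr.group_hom_unit_inverse[OF obj.topological_group hom(1)]
    and tgt = arr.group_hom_unit_inverse[OF obj.topological_group hom(2)]
    and idn = obj.group_hom_unit_inverse[OF arr.topological_group hom(3)]
  show "src G (aone G) = oone G" "x \<in> G1 \<Longrightarrow> src G (ainv G x) = oinv G (src G x)"
    "tgt G (aone G) = oone G" "x \<in> G1 \<Longrightarrow> tgt G (ainv G x) = oinv G (tgt G x)"
    "idn G (oone G) = aone G" "y \<in> G0 \<Longrightarrow> idn G (oinv G y) = ainv G (idn G y)"
    using src tgt idn by simp_all
qed

lemma src_tgt_idn [simp]: "x \<in> G0 \<Longrightarrow> src G (idn G x) = x" "x \<in> G0 \<Longrightarrow> tgt G (idn G x) = x"
  using topological_2space by (auto simp: topological_2space_def)

lemma cmp_idn_left: "g \<in> G1 \<Longrightarrow> cmp G (idn G (src G g)) g = g"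
  and cmp_idn_right: "g \<in> G1 \<Longrightarrow> cmp G g (idn G (tgt G g)) = g"
  and src_inv [simp]: "g \<in> G1 \<Longrightarrow> src G (inv G g) = tgt G g"
  and tgt_inv [simp]: "g \<in> G1 \<Longrightarrow> tgt G (inv G g) = src G g"
  and cmp_inv_right: "g \<in> G1 \<Longrightarrow> cmp G g (inv G g) = idn G (src G g)"
  using topological_2space by (auto simp: topological_2space_def)

lemma interchange:
  assumes "g \<in> G1" "h \<in> G1" "g' \<in> G1" "h' \<in> G1" "tgt G g = src G h" "tgt G g' = src G h'"
  shows "cmp G (amul G g g') (amul G h h') = amul G (cmp G g h) (cmp G g' h')"
  using topological_2group assms unfolding topological_2group_def composable_def by fast

lemma cmp_eq_amul:
  assumes g: "g \<in> G1" and h: "h \<in> G1" and gh: "tgt G g = src G h"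
  shows "cmp G g h = amul G g (amul G (ainv G (idn G (tgt G g))) h)"
proof -
  let ?h' = "amul G (ainv G (idn G (tgt G g))) h"
  have "cmp G (amul G g (aone G)) (amul G (idn G (tgt G g)) ?h')
      = amul G (cmp G g (idn G (tgt G g))) (cmp G (aone G) ?h')"
    by (rule interchange) (use g h gh in auto)
  also have "cmp G (aone G) ?h' = ?h'"
    using cmp_idn_left[of ?h'] g h gh by simp
  finally show ?thesis
    using g h cmp_idn_right by simp
qed

lemma cmp_eq_amul_swap:
  assumes g: "g \<in> G1" and h: "h \<in> G1" and gh: "tgt G g = src G h"
  shows "cmp G g h = amul G h (amul G (ainv G (idn G (tgt G g))) g)"
proof -
  let ?h' = "amul G h (ainv G (idn G (tgt G g)))"
  have "cmp G (amul G (aone G) g) (amul G ?h' (idn G (tgt G g)))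
      = amul G (cmp G (aone G) ?h') (cmp G g (idn G (tgt G g)))"
    by (rule interchange) (use g h gh in auto)
  also have "cmp G (aone G) ?h' = ?h'"
    using cmp_idn_left[of ?h'] g h gh by simp
  finally show ?thesis
    using g h cmp_idn_right by simp
qed

lemma peiffer:
  assumes w: "w \<in> G1" and e: "e \<in> G1" and se: "src G e = oone G"
  shows "amul G w e = amul G (idn G (tgt G w)) (amul G e (amul G (ainv G (idn G (tgt G w))) w))"
proof -
  have c: "tgt G w = src G (amul G (idn G (tgt G w)) e)"
    using w e se by simp
  have "amul G w e = cmp G w (amul G (idn G (tgt G w)) e)"
    using cmp_eq_amul[OF w _ c] w e by simp
  also have "\<dots> = amul G (idn G (tgt G w)) (amul G e (amul G (ainv G (idn G (tgt G w))) w))"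
    using cmp_eq_amul_swap[OF w _ c] w e by simp
  finally show ?thesis .
qed

lemma inv_eq_amul:
  assumes g: "g \<in> G1"
  shows "inv G g = amul G (idn G (tgt G g)) (amul G (ainv G g) (idn G (src G g)))"
proof -
  have "amul G g (amul G (ainv G (idn G (tgt G g))) (inv G g)) = idn G (src G g)"
    using cmp_eq_amul[of g "inv G g"] cmp_inv_right[OF g] g by simp
  then have "amul G (ainv G (idn G (tgt G g))) (inv G g) = amul G (ainv G g) (idn G (src G g))"
    using g by (metis arr.inverse_cancel(1) arr.closed(2,3) structure_maps_closed(2,3,4))
  then show ?thesis
    using g by (metis arr.inverse_cancel(2) structure_maps_closed(2,3,4))
qed

lemma conj_act_eq [simp]:
  "x \<in> G0 \<Longrightarrow> e \<in> G1 \<Longrightarrow> conj_act G x e = amul G (idn G x) (amul G e (ainv G (idn G x)))"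
  by (simp add: conj_act_def)

end

section \<open>Cech cocycles and the 2-space P_c\<close>

locale cocycle = two_group G for G :: "('g0, 'g1, 'm) twogrp_scheme" +
  fixes X :: "'x topology" and I :: "'i set" and U :: "'i \<Rightarrow> 'x set"
    and xx :: "'i \<Rightarrow> 'i \<Rightarrow> 'x \<Rightarrow> 'g0" and ee :: "'i \<Rightarrow> 'i \<Rightarrow> 'i \<Rightarrow> 'x \<Rightarrow> 'g1"
  assumes cech_cocycle: "cech_cocycle G X I U xx ee"
begin

lemma continuous_xx: "i \<in> I \<Longrightarrow> j \<in> I \<Longrightarrow> continuous_map (subtopology X (U i \<inter> U j)) (obT G) (xx i j)"
  using cech_cocycle by (simp add: cech_cocycle_def)

lemma continuous_ee: "i \<in> I \<Longrightarrow> j \<in> I \<Longrightarrow> k \<in> I \<Longrightarrow>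
    continuous_map (subtopology X (U i \<inter> U j \<inter> U k)) (subtopology (arT G) (kerS G)) (ee i j k)"
  using cech_cocycle by (simp add: cech_cocycle_def)

lemma xx_closed [simp]:
  "i \<in> I \<Longrightarrow> j \<in> I \<Longrightarrow> v \<in> topspace X \<Longrightarrow> v \<in> U i \<Longrightarrow> v \<in> U j \<Longrightarrow> xx i j v \<in> G0"
  using continuous_map_funspace[OF continuous_xx, of i j] by auto

lemma ee_kerS:
  assumes "i \<in> I" "j \<in> I" "k \<in> I" "v \<in> topspace X" "v \<in> U i" "v \<in> U j" "v \<in> U k"
  shows "ee i j k v \<in> kerS G"
  using continuous_map_funspace[OF continuous_ee, of i j k] assms by auto

lemma ee_closed [simp]:
  "i \<in> I \<Longrightarrow> j \<in> I \<Longrightarrow> k \<in> I \<Longrightarrow> v \<in> topspace X \<Longrightarrow> v \<in> U i \<Longrightarrow> v \<in> U j \<Longrightarrow> v \<in> U k \<Longrightarrow>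
    ee i j k v \<in> G1"
  and src_ee [simp]:
  "i \<in> I \<Longrightarrow> j \<in> I \<Longrightarrow> k \<in> I \<Longrightarrow> v \<in> topspace X \<Longrightarrow> v \<in> U i \<Longrightarrow> v \<in> U j \<Longrightarrow> v \<in> U k \<Longrightarrow>
    src G (ee i j k v) = oone G"
  using ee_kerS by (simp_all add: kerS_def)

lemma cocycle_tgt:
  "i \<in> I \<Longrightarrow> j \<in> I \<Longrightarrow> k \<in> I \<Longrightarrow> v \<in> topspace X \<Longrightarrow> v \<in> U i \<Longrightarrow> v \<in> U j \<Longrightarrow> v \<in> U k \<Longrightarrow>
    omul G (omul G (tgt G (ee i j k v)) (xx i j v)) (xx j k v) = xx i k v"
  using cech_cocycle unfolding cech_cocycle_def by blast

lemma cocycle_ee: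
  "i \<in> I \<Longrightarrow> j \<in> I \<Longrightarrow> k \<in> I \<Longrightarrow> l \<in> I \<Longrightarrow> v \<in> topspace X \<Longrightarrow>
    v \<in> U i \<Longrightarrow> v \<in> U j \<Longrightarrow> v \<in> U k \<Longrightarrow> v \<in> U l \<Longrightarrow>
    amul G (ee i k l v) (ee i j k v) = amul G (ee i j l v) (conj_act G (xx i j v) (ee j k l v))"
  using cech_cocycle unfolding cech_cocycle_def by blast

lemma tgt_ee_xx:
  assumes "i \<in> I" "j \<in> I" "k \<in> I" "v \<in> topspace X" "v \<in> U i" "v \<in> U j" "v \<in> U k"
  shows "omul G (tgt G (ee i j k v)) (xx i j v) = omul G (xx i k v) (oinv G (xx j k v))"
proof -
  have "omul G (omul G (omul G (tgt G (ee i j k v)) (xx i j v)) (xx j k v)) (oinv G (xx j k v))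
      = omul G (xx i k v) (oinv G (xx j k v))"
    using cocycle_tgt[OF assms] by simp
  then show ?thesis
    using assms by simp
qed

lemma tgt_ee_xx_mult:
  assumes "i \<in> I" "j \<in> I" "k \<in> I" "v \<in> topspace X" "v \<in> U i" "v \<in> U j" "v \<in> U k" "r \<in> G0"
  shows "omul G (tgt G (ee i j k v)) (omul G (xx i j v) r) = omul G (xx i k v) (omul G (oinv G (xx j k v)) r)"
proof -
  have "omul G (omul G (tgt G (ee i j k v)) (xx i j v)) r = omul G (omul G (xx i k v) (oinv G (xx j k v))) r"
    using tgt_ee_xx[OF assms(1-7)] by simp
  then show ?thesis
    using assms by simp
qed

lemma cocycle_ee_mult:
  assumes "i \<in> I" "j \<in> I" "k \<in> I" "l \<in> I" "v \<in> topspace X" "v \<in> U i" "v \<in> U j" "v \<in> U k" "v \<in> U l"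
    and "r \<in> G1"
  shows "amul G (ee i k l v) (amul G (ee i j k v) r)
    = amul G (ee i j l v) (amul G (idn G (xx i j v)) (amul G (ee j k l v) (amul G (ainv G (idn G (xx i j v))) r)))"
proof -
  have "amul G (amul G (ee i k l v) (ee i j k v)) r
      = amul G (amul G (ee i j l v) (conj_act G (xx i j v) (ee j k l v))) r"
    using cocycle_ee[OF assms(1-9)] by simp
  then show ?thesis
    using assms by simp
qed

lemma xx_diag:
  assumes "i \<in> I" "v \<in> topspace X" "v \<in> U i"
  shows "xx i i v = oinv G (tgt G (ee i i i v))"
proof -
  have "omul G (tgt G (ee i i i v)) (xx i i v) = oone G"
    using tgt_ee_xx[of i i i v] assms by simp
  then have "omul G (oinv G (tgt G (ee i i i v))) (omul G (tgt G (ee i i i v)) (xx i i v))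
      = oinv G (tgt G (ee i i i v))"
    using assms by simp
  then show ?thesis
    using assms by simp
qed

text \<open>The cocycle identity at \<open>(i, i, i, j)\<close> makes \<open>ee i i j\<close> the conjugate of \<open>ee i i i\<close> by
  \<open>idn (tgt (ee i i i))\<close>, and the Peiffer identity of \<open>ee i i i\<close> with itself says that this
  conjugate is \<open>ee i i i\<close>.\<close>

lemma ee_iij:
  assumes "i \<in> I" "j \<in> I" "v \<in> topspace X" "v \<in> U i" "v \<in> U j"
  shows "ee i i j v = ee i i i v"
proof -
  let ?E = "ee i i i v" and ?F = "ee i i j v" and ?T = "idn G (tgt G (ee i i i v))"
  have "amul G ?F ?E = amul G ?F (conj_act G (xx i i v) ?F)"
    using cocycle_ee[of i i i j v] assms by simp
  then have "?E = amul G (ainv G ?T) (amul G ?F ?T)"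
    using assms by (simp add: xx_diag)
  then have "amul G ?T (amul G ?E (ainv G ?T))
      = amul G ?T (amul G (amul G (ainv G ?T) (amul G ?F ?T)) (ainv G ?T))"
    by simp
  then have F: "?F = amul G ?T (amul G ?E (ainv G ?T))"
    using assms by simp
  have "amul G ?E ?E = amul G ?T (amul G ?E (amul G (ainv G ?T) ?E))"
    using peiffer[of ?E ?E] assms by simp
  then have "amul G (amul G ?E ?E) (ainv G ?E)
      = amul G (amul G ?T (amul G ?E (amul G (ainv G ?T) ?E))) (ainv G ?E)"
    by simp
  then show ?thesis
    using F assms by simp
qed

lemma ee_ijj:
  assumes "i \<in> I" "j \<in> I" "v \<in> topspace X" "v \<in> U i" "v \<in> U j"
  shows "ee i j j v = amul G (idn G (xx i j v)) (amul G (ee j j j v) (ainv G (idn G (xx i j v))))"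
proof -
  have "amul G (ee i j j v) (ee i j j v) = amul G (ee i j j v) (conj_act G (xx i j v) (ee j j j v))"
    using cocycle_ee[of i j j j v] assms by simp
  then show ?thesis
    using assms by simp
qed

abbreviation "P \<equiv> Pc G X I U xx ee"

lemma Pc_simps [simp]:
  "src P ((i, j), (v, g)) = (i, (v, src G g))"
  "tgt P ((i, j), (v, g)) = (j, (v, omul G (oinv G (xx i j v)) (tgt G g)))"
  "idn P (i, (u, x)) = ((i, i), (u, amul G (ainv G (ee i i i u)) (idn G x)))"
  "inv P ((i, j), (v, g)) = ((j, i), (v, amul G (amul G (amul G (idn G (oinv G (xx i j v)))
      (ainv G (ee i j i v))) (ainv G (ee i i i v))) (inv G g)))"
  "actO P (i, (u, x)) y = (i, (u, omul G x y))"
  "actA P ((i, j), (v, g)) h = ((i, j), (v, amul G g h))"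
  by (simp_all add: Pc_def)

lemma Pc_cmp:
  "cmp P ((i, j), (v, g)) ((j', k), (v', h))
    = ((i, k), (v, amul G (ee i j k v) (cmp G g (amul G (idn G (xx i j v)) h))))"
  by (simp add: Pc_def)

lemma topspace_Pc:
  "topspace (obT P) = Sigma I (\<lambda>i. (topspace X \<inter> U i) \<times> G0)"
  "topspace (arT P) = Sigma (I \<times> I) (\<lambda>(i, j). (topspace X \<inter> (U i \<inter> U j)) \<times> G1)"
  by (auto simp: Pc_def)

lemma mem_Pc_obj [simp]:
  "(i, (u, x)) \<in> topspace (obT P) \<longleftrightarrow> i \<in> I \<and> u \<in> topspace X \<and> u \<in> U i \<and> x \<in> G0"
  by (auto simp: topspace_Pc)

lemma mem_Pc_arr [simp]:
  "((i, j), (v, g)) \<in> topspace (arT P)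
    \<longleftrightarrow> i \<in> I \<and> j \<in> I \<and> v \<in> topspace X \<and> v \<in> U i \<and> v \<in> U j \<and> g \<in> G1"
  by (auto simp: topspace_Pc)

lemma composable_Pc:
  "(a, b) \<in> composable P \<longleftrightarrow> (\<exists>i j k v g h. a = ((i, j), (v, g)) \<and> b = ((j, k), (v, h)) \<and>
     i \<in> I \<and> j \<in> I \<and> k \<in> I \<and> v \<in> topspace X \<and> v \<in> U i \<and> v \<in> U j \<and> v \<in> U k \<and>
     g \<in> G1 \<and> h \<in> G1 \<and> tgt G g = omul G (xx i j v) (src G h))"
proof
  assume "(a, b) \<in> composable P"
  then obtain i j v g j' k v' h where ab: "a = ((i, j), (v, g))" "b = ((j', k), (v', h))"
    and mem: "a \<in> topspace (arT P)" "b \<in> topspace (arT P)" and c: "tgt P a = src P b"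
    unfolding composable_def by (cases a, cases b) auto
  then have "j' = j" "v' = v" "src G h = omul G (oinv G (xx i j v)) (tgt G g)"
    by auto
  moreover have "tgt G g = omul G (xx i j v) (src G h)"
    using mem ab calculation by simp
  ultimately show "\<exists>i j k v g h. a = ((i, j), (v, g)) \<and> b = ((j, k), (v, h)) \<and>
     i \<in> I \<and> j \<in> I \<and> k \<in> I \<and> v \<in> topspace X \<and> v \<in> U i \<and> v \<in> U j \<and> v \<in> U k \<and>
     g \<in> G1 \<and> h \<in> G1 \<and> tgt G g = omul G (xx i j v) (src G h)"
    using ab mem by auto
qed (auto simp: composable_def)

lemma Pc_cmp_eq:
  assumes "i \<in> I" "j \<in> I" "k \<in> I" "v \<in> topspace X" "v \<in> U i" "v \<in> U j" "v \<in> U k" "g \<in> G1" "h \<in> G1"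
    and "tgt G g = omul G (xx i j v) (src G h)"
  shows "cmp P ((i, j), (v, g)) ((j, k), (v, h))
    = ((i, k), (v, amul G (ee i j k v) (amul G g (amul G (ainv G (idn G (src G h))) h))))"
  using assms by (simp add: Pc_cmp cmp_eq_amul)

lemma Pc_src_tgt_cmp:
  "(a, b) \<in> composable P \<Longrightarrow> src P (cmp P a b) = src P a \<and> tgt P (cmp P a b) = tgt P b"
  unfolding composable_Pc by (auto simp: Pc_cmp_eq tgt_ee_xx_mult)

lemma Pc_cmp_assoc:
  assumes ab: "(a, b) \<in> composable P" and c: "c \<in> topspace (arT P)" and bc: "tgt P b = src P c"
  shows "cmp P (cmp P a b) c = cmp P a (cmp P b c)"
proof -
  obtain i j k v g h where a: "a = ((i, j), (v, g))" and b: "b = ((j, k), (v, h))"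
    and mem: "i \<in> I" "j \<in> I" "k \<in> I" "v \<in> topspace X" "v \<in> U i" "v \<in> U j" "v \<in> U k" "g \<in> G1" "h \<in> G1"
    and tg: "tgt G g = omul G (xx i j v) (src G h)"
    using ab unfolding composable_Pc by blast
  have "(b, c) \<in> composable P"
    using ab c bc by (auto simp: composable_def)
  then obtain l m where c: "c = ((k, l), (v, m))" and mem': "l \<in> I" "v \<in> U l" "m \<in> G1"
    and th: "tgt G h = omul G (xx j k v) (src G m)"
    unfolding composable_Pc b by auto
  let ?w = "amul G g (ainv G (idn G (src G h)))"
  have "amul G ?w (ee j k l v)
      = amul G (idn G (xx i j v)) (amul G (ee j k l v) (amul G (ainv G (idn G (xx i j v))) ?w))"
    using peiffer[of ?w "ee j k l v"] mem mem' tg by simp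
  then have "amul G (amul G (ee i k l v) (ee i j k v)) ?w = amul G (ee i j l v) (amul G ?w (ee j k l v))"
    using cocycle_ee[of i j k l v] mem mem' by simp
  then have "amul G (amul G (amul G (ee i k l v) (ee i j k v)) ?w) (amul G h (amul G (ainv G (idn G (src G m))) m))
     = amul G (amul G (ee i j l v) (amul G ?w (ee j k l v))) (amul G h (amul G (ainv G (idn G (src G m))) m))"
    by simp
  moreover have "tgt G (amul G (ee i j k v) (amul G g (amul G (ainv G (idn G (src G h))) h)))
      = omul G (xx i k v) (src G m)"
    using mem mem' tg th by (simp add: tgt_ee_xx_mult)
  ultimately show ?thesis
    unfolding a b c using mem mem' tg th by (simp add: Pc_cmp_eq)
qed

lemma Pc_src_tgt_idn: "x \<in> topspace (obT P) \<Longrightarrow> src P (idn P x) = x \<and> tgt P (idn P x) = x"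
  by (cases x) (auto simp: xx_diag)

lemma Pc_cmp_idn_left:
  assumes "a \<in> topspace (arT P)"
  shows "cmp P (idn P (src P a)) a = a"
proof -
  obtain i j v g where a: "a = ((i, j), (v, g))"
    and mem: "i \<in> I" "j \<in> I" "v \<in> topspace X" "v \<in> U i" "v \<in> U j" "g \<in> G1"
    using assms by (cases a) auto
  have "tgt G (amul G (ainv G (ee i i i v)) (idn G (src G g))) = omul G (xx i i v) (src G g)"
    using mem by (simp add: xx_diag)
  then have "cmp P ((i, i), (v, amul G (ainv G (ee i i i v)) (idn G (src G g)))) ((i, j), (v, g))
    = ((i, j), (v, amul G (ee i i j v) (amul G (amul G (ainv G (ee i i i v)) (idn G (src G g)))
        (amul G (ainv G (idn G (src G g))) g))))"
    using mem by (intro Pc_cmp_eq) auto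
  then show ?thesis
    unfolding a using mem by (simp add: ee_iij[of i j v])
qed

lemma Pc_cmp_idn_right:
  assumes "a \<in> topspace (arT P)"
  shows "cmp P a (idn P (tgt P a)) = a"
proof -
  obtain i j v g where a: "a = ((i, j), (v, g))"
    and mem: "i \<in> I" "j \<in> I" "v \<in> topspace X" "v \<in> U i" "v \<in> U j" "g \<in> G1"
    using assms by (cases a) auto
  let ?y = "omul G (oinv G (xx i j v)) (tgt G g)"
  let ?w = "amul G g (ainv G (idn G ?y))"
  have "amul G ?w (ainv G (ee j j j v))
      = amul G (idn G (xx i j v)) (amul G (ainv G (ee j j j v)) (amul G (ainv G (idn G (xx i j v))) ?w))"
    using peiffer[of ?w "ainv G (ee j j j v)"] mem by simp
  then have unfolded: "amul G (ee i j j v) (amul G (amul G ?w (ainv G (ee j j j v))) (idn G ?y)) = g"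
    using mem by (simp add: ee_ijj[of i j v])
  have "cmp P ((i, j), (v, g)) ((j, j), (v, amul G (ainv G (ee j j j v)) (idn G ?y)))
    = ((i, j), (v, amul G (ee i j j v) (amul G g (amul G (ainv G (idn G (src G (amul G (ainv G (ee j j j v))
        (idn G ?y))))) (amul G (ainv G (ee j j j v)) (idn G ?y))))))"
    using mem by (intro Pc_cmp_eq) auto
  then show ?thesis
    unfolding a Pc_simps using mem unfolded by simp
qed

lemma Pc_inv_closed: "a \<in> topspace (arT P) \<Longrightarrow> inv P a \<in> topspace (arT P)"
  by (cases a) auto

lemma Pc_right_inverse:
  assumes "a \<in> topspace (arT P)"
  shows "src P (inv P a) = tgt P a \<and> tgt P (inv P a) = src P a \<and> cmp P a (inv P a) = idn P (src P a)"
proof -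
  obtain i j v g where a: "a = ((i, j), (v, g))"
    and mem: "i \<in> I" "j \<in> I" "v \<in> topspace X" "v \<in> U i" "v \<in> U j" "g \<in> G1"
    using assms by (cases a) auto
  have "omul G (tgt G (ee i i i v)) (omul G (omul G (tgt G (ee i j i v)) (xx i j v)) (xx j i v)) = oone G"
    unfolding cocycle_tgt[of i j i v, OF mem(1,2,1,3,4,5,4)] using mem by (simp add: xx_diag)
  then have src_back: "omul G (oinv G (omul G (tgt G (ee i i i v))
      (omul G (omul G (tgt G (ee i j i v)) (xx i j v)) (xx j i v)))) (src G g) = src G g"
    using mem by simp
  let ?h = "amul G (amul G (amul G (idn G (oinv G (xx i j v))) (ainv G (ee i j i v)))
      (ainv G (ee i i i v))) (inv G g)"
  have src_h: "src G ?h = omul G (oinv G (xx i j v)) (tgt G g)"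
    using mem by simp
  let ?w = "amul G g (ainv G (idn G (tgt G g)))"
  let ?e = "amul G (ainv G (ee i j i v)) (ainv G (ee i i i v))"
  have "amul G ?w ?e = amul G ?e ?w"
    using peiffer[of ?w ?e] mem by simp
  then have unfolded: "amul G (ee i j i v) (amul G (amul G ?w ?e) (amul G (idn G (tgt G g))
      (amul G (ainv G g) (idn G (src G g))))) = amul G (ainv G (ee i i i v)) (idn G (src G g))"
    using mem by simp
  have "cmp P ((i, j), (v, g)) ((j, i), (v, ?h))
    = ((i, i), (v, amul G (ee i j i v) (amul G g (amul G (ainv G (idn G (src G ?h))) ?h))))"
    using mem src_h by (intro Pc_cmp_eq) auto
  then show ?thesis
    unfolding a Pc_simps src_h using mem unfolded src_back by (simp add: inv_eq_amul)
qed

lemma Pc_inv_laws: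
  assumes a: "a \<in> topspace (arT P)"
  shows "src P (inv P a) = tgt P a \<and> tgt P (inv P a) = src P a \<and> cmp P a (inv P a) = idn P (src P a)
     \<and> cmp P (inv P a) a = idn P (tgt P a)"
proof -
  let ?b = "inv P a" let ?c = "inv P ?b"
  have b: "?b \<in> topspace (arT P)" and c: "?c \<in> topspace (arT P)"
    using Pc_inv_closed a by auto
  note A = Pc_right_inverse[OF a] and B = Pc_right_inverse[OF b]
  have ab: "(a, ?b) \<in> composable P"
    using a b A by (auto simp: composable_def)
  text \<open>A right inverse of a right inverse is the arrow itself, so right inverses are two-sided.\<close>
  have "a = cmp P a (idn P (tgt P a))"
    using Pc_cmp_idn_right a by simp
  also have "\<dots> = cmp P a (cmp P ?b ?c)"
    using A B by simp
  also have "\<dots> = cmp P (cmp P a ?b) ?c"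
    using Pc_cmp_assoc[OF ab c] B by simp
  also have "\<dots> = cmp P (idn P (src P ?c)) ?c"
    using A B by simp
  also have "\<dots> = ?c"
    using Pc_cmp_idn_left c by simp
  finally have "cmp P ?b a = idn P (src P ?b)"
    using B by simp
  then show ?thesis
    using A by simp
qed

lemma Pc_actA_cmp:
  assumes ab: "(a, b) \<in> composable P" and gh: "(g, h) \<in> composable G"
  shows "actA P (cmp P a b) (cmp G g h) = cmp P (actA P a g) (actA P b h)"
proof -
  obtain i j k v g' h' where a: "a = ((i, j), (v, g'))" and b: "b = ((j, k), (v, h'))"
    and mem: "i \<in> I" "j \<in> I" "k \<in> I" "v \<in> topspace X" "v \<in> U i" "v \<in> U j" "v \<in> U k" "g' \<in> G1" "h' \<in> G1"
    and tg': "tgt G g' = omul G (xx i j v) (src G h')"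
    using ab unfolding composable_Pc by blast
  have mg: "g \<in> G1" "h \<in> G1" and tg: "tgt G g = src G h"
    using gh by (auto simp: composable_def)
  let ?w = "amul G g (ainv G (idn G (src G h)))"
  let ?e = "amul G (ainv G (idn G (src G h'))) h'"
  have "amul G ?w ?e = amul G ?e ?w"
    using peiffer[of ?w ?e] mem mg tg by simp
  then have commuted: "amul G (ee i j k v) (amul G g' (amul G (amul G ?w ?e) h))
      = amul G (ee i j k v) (amul G g' (amul G (amul G ?e ?w) h))"
    by simp
  have "cmp P ((i, j), (v, amul G g' g)) ((j, k), (v, amul G h' h))
    = ((i, k), (v, amul G (ee i j k v) (amul G (amul G g' g) (amul G (ainv G (idn G (src G (amul G h' h))))
        (amul G h' h)))))"
    using mem mg tg tg' by (intro Pc_cmp_eq) auto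
  then show ?thesis
    unfolding a b Pc_simps using mem mg tg tg' commuted by (simp add: Pc_cmp_eq cmp_eq_amul)
qed

subsection \<open>Continuity\<close>

lemma Pc_obT: "obT P = sum_topology (\<lambda>i. prod_topology (subtopology X (U i)) (obT G)) I"
  by (simp add: Pc_def)

lemma Pc_arT: "arT P = sum_topology (\<lambda>(i, j). prod_topology (subtopology X (U i \<inter> U j)) (arT G)) (I \<times> I)"
  by (simp add: Pc_def)

lemma continuous_map_xx_comp:
  assumes "i \<in> I" "j \<in> I" "continuous_map Z X f" "\<And>z. z \<in> topspace Z \<Longrightarrow> f z \<in> U i \<and> f z \<in> U j"
  shows "continuous_map Z (obT G) (\<lambda>z. xx i j (f z))"
proof -
  have "continuous_map Z (subtopology X (U i \<inter> U j)) f"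
    using assms by (auto intro!: continuous_map_into_subtopology)
  from continuous_map_compose[OF this continuous_xx[OF assms(1,2)]] show ?thesis
    by (simp add: o_def)
qed

lemma continuous_map_ee_comp:
  assumes "i \<in> I" "j \<in> I" "k \<in> I" "continuous_map Z X f"
    and "\<And>z. z \<in> topspace Z \<Longrightarrow> f z \<in> U i \<and> f z \<in> U j \<and> f z \<in> U k"
  shows "continuous_map Z (arT G) (\<lambda>z. ee i j k (f z))"
proof -
  have "continuous_map Z (subtopology X (U i \<inter> U j \<inter> U k)) f"
    using assms by (auto intro!: continuous_map_into_subtopology)
  from continuous_map_compose[OF this continuous_ee[OF assms(1-3)]] show ?thesis
    by (simp add: o_def continuous_map_in_subtopology)
qed

lemma continuous_map_Pc_obj_coords:
  assumes "continuous_map Z (obT P) f"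
  shows "continuous_map Z X (\<lambda>z. fst (snd (f z)))" "continuous_map Z (obT G) (\<lambda>z. snd (snd (f z)))"
proof -
  have "continuous_map (obT P) (prod_topology X (obT G)) snd"
    unfolding Pc_obT
    by (rule continuous_map_from_sum_topology) (simp add: continuous_map_prod_subtopology_incl)
  from continuous_map_compose[OF assms this] show
    "continuous_map Z X (\<lambda>z. fst (snd (f z)))" "continuous_map Z (obT G) (\<lambda>z. snd (snd (f z)))"
    using continuous_map_compose[OF _ continuous_map_fst] continuous_map_compose[OF _ continuous_map_snd]
    by (auto simp: o_def)
qed

lemma continuous_map_Pc_arr_coords:
  assumes "continuous_map Z (arT P) f"
  shows "continuous_map Z X (\<lambda>z. fst (snd (f z)))" "continuous_map Z (arT G) (\<lambda>z. snd (snd (f z)))"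
proof -
  have "continuous_map (arT P) (prod_topology X (arT G)) snd"
    unfolding Pc_arT
    by (rule continuous_map_from_sum_topology) (auto simp: continuous_map_prod_subtopology_incl)
  from continuous_map_compose[OF assms this] show
    "continuous_map Z X (\<lambda>z. fst (snd (f z)))" "continuous_map Z (arT G) (\<lambda>z. snd (snd (f z)))"
    using continuous_map_compose[OF _ continuous_map_fst] continuous_map_compose[OF _ continuous_map_snd]
    by (auto simp: o_def)
qed

lemma continuous_map_into_Pc_obj:
  assumes "i \<in> I" "continuous_map Z X f" "\<And>z. z \<in> topspace Z \<Longrightarrow> f z \<in> U i"
    and "continuous_map Z (obT G) g"
  shows "continuous_map Z (obT P) (\<lambda>z. (i, (f z, g z)))"
proof -
  have "continuous_map Z (prod_topology (subtopology X (U i)) (obT G)) (\<lambda>z. (f z, g z))"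
    using assms by (auto intro!: continuous_map_pairedI continuous_map_into_subtopology)
  then show ?thesis
    unfolding Pc_obT using assms(1) by (rule continuous_map_into_sum_topology[rotated])
qed

lemma continuous_map_into_Pc_arr:
  assumes "i \<in> I" "j \<in> I" "continuous_map Z X f" "\<And>z. z \<in> topspace Z \<Longrightarrow> f z \<in> U i \<and> f z \<in> U j"
    and "continuous_map Z (arT G) g"
  shows "continuous_map Z (arT P) (\<lambda>z. ((i, j), (f z, g z)))"
proof -
  have "continuous_map Z (prod_topology (subtopology X (U i \<inter> U j)) (arT G)) (\<lambda>z. (f z, g z))"
    using assms by (auto intro!: continuous_map_pairedI continuous_map_into_subtopology)
  then show ?thesis
    unfolding Pc_arT using assms(1,2) continuous_map_into_sum_topology[of "(i, j)" "I \<times> I" Z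
      "\<lambda>(i, j). prod_topology (subtopology X (U i \<inter> U j)) (arT G)"]
    by simp
qed

text \<open>The pair \<open>(fst p, snd p)\<close> is spelled out so that the pattern-matching rules \<open>Pc_simps\<close>
  can be unfolded in the hypothesis.\<close>

lemma continuous_map_from_Pc_obj:
  assumes "\<And>i. i \<in> I \<Longrightarrow> continuous_map (prod_topology (subtopology X (U i)) (obT G)) Y
      (\<lambda>p. f (i, (fst p, snd p)))"
  shows "continuous_map (obT P) Y f"
  unfolding Pc_obT using assms by (intro continuous_map_from_sum_topology) simp

lemma continuous_map_from_Pc_arr:
  assumes "\<And>i j. i \<in> I \<Longrightarrow> j \<in> I \<Longrightarrow> continuous_map (prod_topology (subtopology X (U i \<inter> U j)) (arT G)) Y
      (\<lambda>p. f ((i, j), (fst p, snd p)))"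
  shows "continuous_map (arT P) Y f"
  unfolding Pc_arT using assms by (intro continuous_map_from_sum_topology) auto

lemma continuous_map_Pc_obj_slices:
  assumes "continuous_map Z (obT P) h"
    and "\<And>i. i \<in> I \<Longrightarrow> continuous_map (subtopology Z {z. fst (h z) = i}) Y f"
  shows "continuous_map Z Y f"
  using assms(1)[unfolded Pc_obT] assms(2) by (rule continuous_map_sum_slices)

lemma continuous_map_Pc_arr_slices:
  assumes "continuous_map Z (arT P) h"
    and "\<And>i j. i \<in> I \<Longrightarrow> j \<in> I \<Longrightarrow> continuous_map (subtopology Z {z. fst (h z) = (i, j)}) Y f"
  shows "continuous_map Z Y f"
  using assms(1)[unfolded Pc_arT] by (rule continuous_map_sum_slices) (use assms(2) in auto)

lemma continuous_map_Pc_src: "continuous_map (arT P) (obT P) (src P)"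
  by (intro continuous_map_from_Pc_arr, unfold Pc_simps)
    (auto intro!: continuous_map_into_Pc_obj continuous_map_fst_prod_subtopology continuous_map_two_group
      continuous_map_snd)

lemma continuous_map_Pc_tgt: "continuous_map (arT P) (obT P) (tgt P)"
  by (intro continuous_map_from_Pc_arr, unfold Pc_simps)
    (auto intro!: continuous_map_into_Pc_obj continuous_map_fst_prod_subtopology continuous_map_two_group
      continuous_map_snd
      continuous_map_xx_comp)

lemma continuous_map_Pc_inv: "continuous_map (arT P) (arT P) (inv P)"
  by (intro continuous_map_from_Pc_arr, unfold Pc_simps)
    (auto intro!: continuous_map_into_Pc_arr continuous_map_fst_prod_subtopology continuous_map_two_group
      continuous_map_snd continuous_map_xx_comp continuous_map_ee_comp)

lemma continuous_map_Pc_idn: "continuous_map (obT P) (arT P) (idn P)"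
  by (intro continuous_map_from_Pc_obj, unfold Pc_simps)
    (auto intro!: continuous_map_into_Pc_arr continuous_map_fst_prod_subtopology continuous_map_two_group
      continuous_map_snd continuous_map_ee_comp)

lemma continuous_map_pi0: "continuous_map (obT P) X \<pi>c0"
  by (intro continuous_map_from_Pc_obj) (simp add: \<pi>c0_def case_prod_unfold continuous_map_fst_prod_subtopology)

lemma continuous_map_pi1: "continuous_map (arT P) X \<pi>c1"
  by (intro continuous_map_from_Pc_arr) (simp add: \<pi>c1_def case_prod_unfold continuous_map_fst_prod_subtopology)

lemma continuous_map_Pc_actO: "continuous_map (prod_topology (obT P) (obT G)) (obT P) (\<lambda>(p, x). actO P p x)"
proof (rule continuous_map_Pc_obj_slices[OF continuous_map_fst])
  fix i assume i: "i \<in> I"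
  let ?Z = "subtopology (prod_topology (obT P) (obT G)) {z. fst (fst z) = i}"
  note p = continuous_map_Pc_obj_coords[OF continuous_map_subtopology_fst]
  have "continuous_map ?Z (obT P) (\<lambda>z. (i, (fst (snd (fst z)), omul G (snd (snd (fst z))) (snd z))))"
    by (rule continuous_map_into_Pc_obj)
      (use i in \<open>auto intro!: p continuous_map_two_group continuous_map_subtopology_snd simp: topspace_Pc\<close>)
  then show "continuous_map ?Z (obT P) (\<lambda>(p, x). actO P p x)"
    by (rule continuous_map_eq) (use i in \<open>auto simp: topspace_Pc\<close>)
qed

lemma continuous_map_Pc_actA: "continuous_map (prod_topology (arT P) (arT G)) (arT P) (\<lambda>(a, g). actA P a g)"
proof (rule continuous_map_Pc_arr_slices[OF continuous_map_fst])
  fix i j assume ij: "i \<in> I" "j \<in> I"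
  let ?Z = "subtopology (prod_topology (arT P) (arT G)) {z. fst (fst z) = (i, j)}"
  note a = continuous_map_Pc_arr_coords[OF continuous_map_subtopology_fst]
  have "continuous_map ?Z (arT P) (\<lambda>z. ((i, j), (fst (snd (fst z)), amul G (snd (snd (fst z))) (snd z))))"
    by (rule continuous_map_into_Pc_arr)
      (use ij in \<open>auto intro!: a continuous_map_two_group continuous_map_subtopology_snd simp: topspace_Pc\<close>)
  then show "continuous_map ?Z (arT P) (\<lambda>(a, g). actA P a g)"
    by (rule continuous_map_eq) (use ij in \<open>auto simp: topspace_Pc\<close>)
qed

lemma continuous_map_Pc_cmp:
  "continuous_map (subtopology (prod_topology (arT P) (arT P)) (composable P)) (arT P) (\<lambda>(a, b). cmp P a b)"
proof (rule continuous_map_Pc_arr_slices[OF continuous_map_subtopology_fst])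
  fix i j assume ij: "i \<in> I" "j \<in> I"
  let ?Z = "subtopology (subtopology (prod_topology (arT P) (arT P)) (composable P)) {z. fst (fst z) = (i, j)}"
  have "continuous_map ?Z (arT P) snd"
    unfolding subtopology_subtopology by (rule continuous_map_subtopology_snd)
  then show "continuous_map ?Z (arT P) (\<lambda>(a, b). cmp P a b)"
  proof (rule continuous_map_Pc_arr_slices)
    fix j' k assume jk: "j' \<in> I" "k \<in> I"
    let ?W = "subtopology ?Z {z. fst (snd z) = (j', k)}"
    have points: "\<exists>v g h. z = (((i, j), (v, g)), ((j, k), (v, h))) \<and> v \<in> topspace X \<and>
        v \<in> U i \<and> v \<in> U j \<and> v \<in> U k \<and> g \<in> G1 \<and> h \<in> G1 \<and> tgt G g = omul G (xx i j v) (src G h)"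
      if "z \<in> topspace ?W" for z
    proof -
      have "(fst z, snd z) \<in> composable P" "fst (fst z) = (i, j)" "fst (snd z) = (j', k)"
        using that by auto
      then show ?thesis
        unfolding composable_Pc by (cases z) auto
    qed
    have "continuous_map ?W (arT P) fst" "continuous_map ?W (arT P) snd"
      unfolding subtopology_subtopology
      by (rule continuous_map_subtopology_fst, rule continuous_map_subtopology_snd)
    note v = continuous_map_Pc_arr_coords(1)[OF this(1)]
      and g = continuous_map_Pc_arr_coords(2)[OF this(1)]
      and h = continuous_map_Pc_arr_coords(2)[OF this(2)]
    have base: "fst (snd (fst z)) \<in> U i \<and> fst (snd (fst z)) \<in> U j \<and> fst (snd (fst z)) \<in> U k"
      if "z \<in> topspace ?W" for z
      using points[OF that] by auto
    have xx: "continuous_map ?W (obT G) (\<lambda>z. xx i j (fst (snd (fst z))))"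
      by (rule continuous_map_xx_comp[OF ij v]) (use base in blast)
    have "continuous_map ?W (arT G)
        (\<lambda>z. cmp G (snd (snd (fst z))) (amul G (idn G (xx i j (fst (snd (fst z))))) (snd (snd (snd z)))))"
    proof (rule continuous_map_cmp[OF g arr.continuous_map_mult[OF continuous_map_idn[OF xx] h]])
      fix z assume "z \<in> topspace ?W"
      then obtain v g h where "z = (((i, j), (v, g)), ((j, k), (v, h)))" "v \<in> topspace X"
        "v \<in> U i" "v \<in> U j" "g \<in> G1" "h \<in> G1" "tgt G g = omul G (xx i j v) (src G h)"
        using points by blast
      then show "tgt G (snd (snd (fst z))) = src G (amul G (idn G (xx i j (fst (snd (fst z))))) (snd (snd (snd z))))"
        using ij by simp
    qed
    then have "continuous_map ?W (arT P) (\<lambda>z. ((i, k), (fst (snd (fst z)), amul G (ee i j k (fst (snd (fst z))))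
        (cmp G (snd (snd (fst z))) (amul G (idn G (xx i j (fst (snd (fst z))))) (snd (snd (snd z))))))))"
      by (intro continuous_map_into_Pc_arr arr.continuous_map_mult continuous_map_ee_comp ij jk v)
        (use base in auto)
    then show "continuous_map ?W (arT P) (\<lambda>(a, b). cmp P a b)"
    proof (rule continuous_map_eq)
      fix z assume "z \<in> topspace ?W"
      then obtain v g h where "z = (((i, j), (v, g)), ((j, k), (v, h)))"
        using points by blast
      then show "((i, k), (fst (snd (fst z)), amul G (ee i j k (fst (snd (fst z))))
          (cmp G (snd (snd (fst z))) (amul G (idn G (xx i j (fst (snd (fst z))))) (snd (snd (snd z)))))))
          = (case z of (a, b) \<Rightarrow> cmp P a b)"
        by (simp add: Pc_cmp)
    qed
  qed
qed

lemma Pc_topological_2space: "topological_2space P"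
  unfolding topological_2space_def
  using continuous_map_Pc_src continuous_map_Pc_tgt continuous_map_Pc_idn continuous_map_Pc_inv
    continuous_map_Pc_cmp Pc_src_tgt_cmp Pc_cmp_assoc Pc_src_tgt_idn Pc_cmp_idn_left Pc_cmp_idn_right
    Pc_inv_laws
  by blast

lemma Pc_G_2space: "G_2space G P"
  unfolding G_2space_def
  by (intro conjI Pc_topological_2space continuous_map_Pc_actO continuous_map_Pc_actA)
    (use Pc_actA_cmp in \<open>auto simp: topspace_Pc\<close>)

lemma Pc_projection_functor: "cont_functor P (disc X) \<pi>c0 \<pi>c1"
  unfolding cont_functor_def
  using continuous_map_pi0 continuous_map_pi1
  by (auto simp: disc_def \<pi>c0_def \<pi>c1_def topspace_Pc composable_Pc Pc_cmp)

end

section \<open>Local trivializations\<close>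

lemma \<pi>c_simps [simp]: "\<pi>c0 (j, (u, x)) = u" "\<pi>c1 ((j, k), (v, g)) = v"
  by (simp_all add: \<pi>c0_def \<pi>c1_def)

locale chart = cocycle G X I U xx ee
  for G :: "('g0, 'g1, 'm) twogrp_scheme" and X :: "'x topology" and I :: "'i set" and U xx ee +
  fixes i :: 'i
  assumes i: "i \<in> I"
begin

abbreviation "R \<equiv> restr P \<pi>c0 (U i)"
abbreviation "T \<equiv> triv X (U i) G"

definition "psi0 = (\<lambda>(j, (u, x)). (u, omul G (xx i j u) x))"
definition "psi1 = (\<lambda>((j, k), (v, g)). (v, amul G (ee i j k v) (amul G (idn G (xx i j v)) g)))"
definition "phi0 = (\<lambda>(u, z). (i, (u, z)))"
definition "phi1 = (\<lambda>(v, h). ((i, i), (v, amul G (ainv G (ee i i i v)) h)))"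
definition "eps = (\<lambda>(j, (u, x)). ((i, j), (u, idn G (omul G (xx i j u) x))))"
definition "eta = (\<lambda>(u, z). (u, amul G (ainv G (ee i i i u)) (idn G z)))"

lemma chart_maps [simp]:
  "psi0 (j, (u, x)) = (u, omul G (xx i j u) x)"
  "psi1 ((j, k), (v, g)) = (v, amul G (ee i j k v) (amul G (idn G (xx i j v)) g))"
  "phi0 (u, z) = (i, (u, z))"
  "phi1 (v, h) = ((i, i), (v, amul G (ainv G (ee i i i v)) h))"
  "eps (j, (u, x)) = ((i, j), (u, idn G (omul G (xx i j u) x)))"
  "eta (u, z) = (u, amul G (ainv G (ee i i i u)) (idn G z))"
  by (simp_all add: psi0_def psi1_def phi0_def phi1_def eps_def eta_def)

lemma restr_simps [simp]:
  "src R = src P" "tgt R = tgt P" "cmp R = cmp P" "idn R = idn P" "inv R = inv P"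
  "actO R = actO P" "actA R = actA P"
  "obT R = subtopology (obT P) {p. \<pi>c0 p \<in> U i}"
  "arT R = subtopology (arT P) {a. \<pi>c0 (src P a) \<in> U i \<and> \<pi>c0 (tgt P a) \<in> U i}"
  by (simp_all add: restr_def)

lemma triv_simps [simp]:
  "src T (u, g) = (u, src G g)" "tgt T (u, g) = (u, tgt G g)" "cmp T (u, g) (v, h) = (u, cmp G g h)"
  "idn T (u, x) = (u, idn G x)" "actO T (u, x) y = (u, omul G x y)" "actA T (u, g) h = (u, amul G g h)"
  "obT T = prod_topology (subtopology X (U i)) (obT G)"
  "arT T = prod_topology (subtopology X (U i)) (arT G)"
  by (simp_all add: triv_def)

lemma composable_restr:
  "(a, b) \<in> composable R \<longleftrightarrow> (\<exists>j k l v g h. a = ((j, k), (v, g)) \<and> b = ((k, l), (v, h)) \<and>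
     j \<in> I \<and> k \<in> I \<and> l \<in> I \<and> v \<in> topspace X \<and> v \<in> U j \<and> v \<in> U k \<and> v \<in> U l \<and> v \<in> U i \<and>
     g \<in> G1 \<and> h \<in> G1 \<and> tgt G g = omul G (xx j k v) (src G h))"
proof -
  have "(a, b) \<in> composable R \<longleftrightarrow> (a, b) \<in> composable P \<and> a \<in> topspace (arT R) \<and> b \<in> topspace (arT R)"
    by (auto simp: composable_def)
  then show ?thesis
    unfolding composable_Pc by auto
qed

lemma continuous_map_restr_incl:
  "continuous_map (obT R) (obT P) (\<lambda>p. p)" "continuous_map (arT R) (arT P) (\<lambda>a. a)"
  using continuous_map_from_subtopology[OF continuous_map_id] by (simp_all add: id_def)

lemma restr_obj_slice_points:
  "z \<in> topspace (subtopology (obT R) {p. fst p = j})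
    \<Longrightarrow> \<exists>u x. z = (j, (u, x)) \<and> j \<in> I \<and> u \<in> topspace X \<and> u \<in> U j \<and> u \<in> U i \<and> x \<in> G0"
  by (cases z) auto

lemma restr_arr_slice_points:
  "z \<in> topspace (subtopology (arT R) {a. fst a = (j, k)})
    \<Longrightarrow> \<exists>v g. z = ((j, k), (v, g)) \<and> j \<in> I \<and> k \<in> I \<and> v \<in> topspace X \<and> v \<in> U j \<and> v \<in> U k \<and>
        v \<in> U i \<and> g \<in> G1"
  by (cases z) auto

lemma continuous_map_psi0: "continuous_map (obT R) (obT T) psi0"
proof (rule continuous_map_Pc_obj_slices[OF continuous_map_restr_incl(1)])
  fix j assume j: "j \<in> I"
  let ?Z = "subtopology (obT R) {p. fst p = j}"
  note u = continuous_map_Pc_obj_coords(1)[OF continuous_map_from_subtopology[OF continuous_map_restr_incl(1)]]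
    and x = continuous_map_Pc_obj_coords(2)[OF continuous_map_from_subtopology[OF continuous_map_restr_incl(1)]]
  have base: "fst (snd z) \<in> U i \<and> fst (snd z) \<in> U j" if "z \<in> topspace ?Z" for z
    using restr_obj_slice_points[OF that] by force
  have "continuous_map ?Z (obT T) (\<lambda>z. (fst (snd z), omul G (xx i j (fst (snd z))) (snd (snd z))))"
    unfolding triv_simps
    by (intro continuous_map_pairedI continuous_map_into_subtopology u x obj.continuous_map_mult
        continuous_map_xx_comp[OF i j u]) (use base in auto)
  then show "continuous_map (subtopology (obT R) {z. fst z = j}) (obT T) psi0"
    by (rule continuous_map_eq) (use restr_obj_slice_points in force)
qed

lemma continuous_map_psi1: "continuous_map (arT R) (arT T) psi1"
proof (rule continuous_map_Pc_arr_slices[OF continuous_map_restr_incl(2)])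
  fix j k assume jk: "j \<in> I" "k \<in> I"
  let ?Z = "subtopology (arT R) {a. fst a = (j, k)}"
  note v = continuous_map_Pc_arr_coords(1)[OF continuous_map_from_subtopology[OF continuous_map_restr_incl(2)]]
    and g = continuous_map_Pc_arr_coords(2)[OF continuous_map_from_subtopology[OF continuous_map_restr_incl(2)]]
  have base: "fst (snd z) \<in> U i \<and> fst (snd z) \<in> U j \<and> fst (snd z) \<in> U k" if "z \<in> topspace ?Z" for z
    using restr_arr_slice_points[OF that] by force
  have "continuous_map ?Z (arT T)
      (\<lambda>z. (fst (snd z), amul G (ee i j k (fst (snd z))) (amul G (idn G (xx i j (fst (snd z)))) (snd (snd z)))))"
    unfolding triv_simps
    by (intro continuous_map_pairedI continuous_map_into_subtopology v g arr.continuous_map_mult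
        continuous_map_idn continuous_map_xx_comp[OF i jk(1) v] continuous_map_ee_comp[OF i jk v])
      (use base in auto)
  then show "continuous_map (subtopology (arT R) {z. fst z = (j, k)}) (arT T) psi1"
    by (rule continuous_map_eq) (use restr_arr_slice_points in force)
qed

lemma continuous_map_eps: "continuous_map (obT R) (arT R) eps"
proof (rule continuous_map_Pc_obj_slices[OF continuous_map_restr_incl(1)])
  fix j assume j: "j \<in> I"
  let ?Z = "subtopology (obT R) {p. fst p = j}"
  note u = continuous_map_Pc_obj_coords(1)[OF continuous_map_from_subtopology[OF continuous_map_restr_incl(1)]]
    and x = continuous_map_Pc_obj_coords(2)[OF continuous_map_from_subtopology[OF continuous_map_restr_incl(1)]]
  have base: "fst (snd z) \<in> U i \<and> fst (snd z) \<in> U j" if "z \<in> topspace ?Z" for z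
    using restr_obj_slice_points[OF that] by force
  have "continuous_map ?Z (arT P) (\<lambda>z. ((i, j), (fst (snd z), idn G (omul G (xx i j (fst (snd z))) (snd (snd z))))))"
    by (intro continuous_map_into_Pc_arr i j u continuous_map_idn obj.continuous_map_mult x
        continuous_map_xx_comp[OF i j u]) (use base in auto)
  then have "continuous_map ?Z (arT R)
      (\<lambda>z. ((i, j), (fst (snd z), idn G (omul G (xx i j (fst (snd z))) (snd (snd z))))))"
    unfolding restr_simps by (rule continuous_map_into_subtopology) (use base in force)
  then show "continuous_map (subtopology (obT R) {z. fst z = j}) (arT R) eps"
    by (rule continuous_map_eq) (use restr_obj_slice_points in force)
qed

lemma continuous_map_phi0: "continuous_map (obT T) (obT R) phi0"
proof -
  have "continuous_map (obT T) (obT P) (\<lambda>z. (i, (fst z, snd z)))"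
    unfolding triv_simps
    by (intro continuous_map_into_Pc_obj i continuous_map_fst_prod_subtopology continuous_map_snd) auto
  then have "continuous_map (obT T) (obT R) (\<lambda>z. (i, (fst z, snd z)))"
    unfolding restr_simps by (rule continuous_map_into_subtopology) auto
  then show ?thesis
    by (rule continuous_map_eq) auto
qed

lemma continuous_map_phi1: "continuous_map (arT T) (arT R) phi1"
proof -
  have "continuous_map (arT T) (arT P) (\<lambda>z. ((i, i), (fst z, amul G (ainv G (ee i i i (fst z))) (snd z))))"
    unfolding triv_simps
    by (intro continuous_map_into_Pc_arr i continuous_map_fst_prod_subtopology arr.continuous_map_mult arr.continuous_map_inverse
        continuous_map_ee_comp[OF i i i continuous_map_fst_prod_subtopology] continuous_map_snd) auto
  then have "continuous_map (arT T) (arT R) (\<lambda>z. ((i, i), (fst z, amul G (ainv G (ee i i i (fst z))) (snd z))))"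
    unfolding restr_simps by (rule continuous_map_into_subtopology) auto
  then show ?thesis
    by (rule continuous_map_eq) auto
qed

lemma continuous_map_eta: "continuous_map (obT T) (arT T) eta"
proof -
  have "continuous_map (obT T) (arT T) (\<lambda>z. (fst z, amul G (ainv G (ee i i i (fst z))) (idn G (snd z))))"
    unfolding triv_simps
    by (intro continuous_map_pairedI continuous_map_fst arr.continuous_map_mult arr.continuous_map_inverse
        continuous_map_idn continuous_map_ee_comp[OF i i i continuous_map_fst_prod_subtopology] continuous_map_snd) auto
  then show ?thesis
    by (rule continuous_map_eq) auto
qed

lemma psi1_cmp:
  assumes "(a, b) \<in> composable R"
  shows "psi1 (cmp R a b) = cmp T (psi1 a) (psi1 b)"
proof -
  obtain j k l v g h where a: "a = ((j, k), (v, g))" and b: "b = ((k, l), (v, h))"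
    and mem: "j \<in> I" "k \<in> I" "l \<in> I" "v \<in> topspace X" "v \<in> U j" "v \<in> U k" "v \<in> U l" "v \<in> U i"
      "g \<in> G1" "h \<in> G1"
    and tg: "tgt G g = omul G (xx j k v) (src G h)"
    using assms unfolding composable_restr by blast
  let ?w = "amul G (ee i j k v) (amul G (idn G (xx i j v))
      (amul G g (amul G (ainv G (idn G (src G h))) (ainv G (idn G (xx i k v))))))"
  have "tgt G ?w = oone G"
    using mem i tg by (simp add: tgt_ee_xx_mult)
  then have "amul G ?w (ee i k l v) = amul G (ee i k l v) ?w"
    using peiffer[of ?w "ee i k l v"] mem i by simp
  then have "amul G (amul G ?w (ee i k l v)) (amul G (idn G (xx i k v)) h) =
     amul G (ee i j l v) (amul G (idn G (xx i j v)) (amul G (ee j k l v) (amul G g (amul G (ainv G (idn G (src G h))) h))))"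
    using mem i by (simp add: cocycle_ee_mult)
  moreover have "tgt G (amul G (ee i j k v) (amul G (idn G (xx i j v)) g))
      = src G (amul G (ee i k l v) (amul G (idn G (xx i k v)) h))"
    using mem i tg by (simp add: tgt_ee_xx_mult)
  ultimately show ?thesis
    unfolding a b restr_simps using mem i tg by (simp add: Pc_cmp_eq cmp_eq_amul tgt_ee_xx_mult)
qed

lemma psi_G_functor: "G_functor G R T psi0 psi1"
  unfolding G_functor_def cont_functor_def
  using continuous_map_psi0 continuous_map_psi1 psi1_cmp i
  by (auto simp: tgt_ee_xx_mult ee_ijj[of i])

lemma phi1_cmp:
  assumes "(a, b) \<in> composable T"
  shows "phi1 (cmp T a b) = cmp R (phi1 a) (phi1 b)"
proof -
  obtain u g h where a: "a = (u, g)" and b: "b = (u, h)"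
    and mem: "u \<in> topspace X" "u \<in> U i" "g \<in> G1" "h \<in> G1" and tg: "tgt G g = src G h"
    using assms by (cases a, cases b) (auto simp: composable_def)
  let ?e = "ainv G (ee i i i u)"
  let ?w = "amul G g (ainv G (idn G (src G h)))"
  have "amul G ?w ?e = amul G ?e ?w"
    using peiffer[of ?w ?e] mem i tg by simp
  then have key: "amul G (amul G ?w ?e) h = amul G ?e (amul G g (amul G (ainv G (idn G (src G h))) h))"
    using mem i by simp
  have "tgt G (amul G ?e g) = omul G (xx i i u) (src G (amul G ?e h))"
    using mem i tg by (simp add: xx_diag)
  then have "cmp P ((i, i), (u, amul G ?e g)) ((i, i), (u, amul G ?e h))
    = ((i, i), (u, amul G (ee i i i u) (amul G (amul G ?e g)
        (amul G (ainv G (idn G (src G (amul G ?e h)))) (amul G ?e h)))))"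
    using mem i by (intro Pc_cmp_eq) auto
  then show ?thesis
    unfolding a b restr_simps triv_simps chart_maps using mem i tg key by (simp add: cmp_eq_amul)
qed

lemma phi_G_functor: "G_functor G T R phi0 phi1"
  unfolding G_functor_def cont_functor_def
  using continuous_map_phi0 continuous_map_phi1 phi1_cmp i
  by (auto simp: xx_diag)

lemma eps_G0_nat_iso: "G0_nat_iso G R R (phi0 \<circ> psi0) (phi1 \<circ> psi1) id id eps"
  unfolding G0_nat_iso_def cont_nat_trans_def
proof (intro conjI ballI continuous_map_eps)
  fix a assume "a \<in> topspace (arT R)"
  then obtain j k v g where a: "a = ((j, k), (v, g))"
    and mem: "j \<in> I" "k \<in> I" "v \<in> topspace X" "v \<in> U j" "v \<in> U k" "g \<in> G1" "v \<in> U i"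
    by (cases a) auto
  let ?y = "omul G (xx i k v) (omul G (oinv G (xx j k v)) (tgt G g))"
  let ?psi = "amul G (ee i j k v) (amul G (idn G (xx i j v)) g)"
  have "tgt G (amul G (ainv G (ee i i i v)) ?psi) = omul G (xx i i v) (src G (idn G ?y))"
    using mem i by (simp add: xx_diag tgt_ee_xx_mult)
  then have cmp_left: "cmp P ((i, i), (v, amul G (ainv G (ee i i i v)) ?psi)) ((i, k), (v, idn G ?y))
    = ((i, k), (v, amul G (ee i i k v) (amul G (amul G (ainv G (ee i i i v)) ?psi)
        (amul G (ainv G (idn G (src G (idn G ?y)))) (idn G ?y)))))"
    using mem i by (intro Pc_cmp_eq) auto
  have cmp_right: "cmp P ((i, j), (v, idn G (omul G (xx i j v) (src G g)))) ((j, k), (v, g))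
    = ((i, k), (v, amul G (ee i j k v) (amul G (idn G (omul G (xx i j v) (src G g)))
        (amul G (ainv G (idn G (src G g))) g))))"
    using mem i by (intro Pc_cmp_eq) auto
  show "cmp R ((phi1 \<circ> psi1) a) (eps (tgt R a)) = cmp R (eps (src R a)) (id a)"
    unfolding a restr_simps Pc_simps o_def chart_maps id_def cmp_left cmp_right using mem i by (simp add: ee_iij[of i k v])
qed (use i in auto)

lemma eta_G0_nat_iso: "G0_nat_iso G T T id id (psi0 \<circ> phi0) (psi1 \<circ> phi1) eta"
  unfolding G0_nat_iso_def cont_nat_trans_def
proof (intro conjI ballI continuous_map_eta)
  fix a assume "a \<in> topspace (arT T)"
  then obtain v h where a: "a = (v, h)" and mem: "v \<in> topspace X" "v \<in> U i" "h \<in> G1"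
    by (cases a) auto
  let ?E = "ee i i i v" and ?T = "idn G (tgt G (ee i i i v))"
  have EE: "amul G ?E ?E = amul G ?T (amul G ?E (amul G (ainv G ?T) ?E))"
    using peiffer[of ?E ?E] mem i by simp
  have conj_E: "amul G ?T (amul G ?E (amul G (ainv G ?T) r)) = amul G ?E r" if "r \<in> G1" for r
  proof -
    have "amul G (amul G (amul G ?E ?E) (ainv G ?E)) r
        = amul G (amul G (amul G ?T (amul G ?E (amul G (ainv G ?T) ?E))) (ainv G ?E)) r"
      unfolding EE ..
    then show ?thesis
      using mem i that by simp
  qed
  let ?w = "amul G h (ainv G (idn G (tgt G h)))"
  have "amul G ?w (ainv G ?E) = amul G (ainv G ?E) ?w"
    using peiffer[of ?w "ainv G ?E"] mem i by simp
  then have "amul G (amul G ?w (ainv G ?E)) (idn G (tgt G h)) = amul G (ainv G ?E) h"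
    using mem i by simp
  then show "cmp T (id a) (eta (tgt T a)) = cmp T (eta (src T a)) ((psi1 \<circ> phi1) a)"
    unfolding a using mem i by (simp add: cmp_eq_amul xx_diag conj_E)
qed (use i in \<open>auto simp: xx_diag\<close>)

lemma trivializing_chart:
  assumes "openin X (U i)"
  shows "trivializing_chart G X P \<pi>c0 \<pi>c1 (U i) psi0 psi1 phi0 phi1 eps"
  unfolding trivializing_chart_def G_equivalence_def G_pseudo_inverse_def
  using assms psi_G_functor phi_G_functor eps_G0_nat_iso eta_G0_nat_iso by auto

end

lemma (in cocycle) Pc_trivializing_cover:
  assumes "\<forall>i \<in> I. openin X (U i)" and "(\<Union>i \<in> I. U i) = topspace X"
  shows "trivializing_cover G X P \<pi>c0 \<pi>c1 (U ` I)"
  unfolding trivializing_cover_def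
proof (intro conjI ballI)
  show "\<Union> (U ` I) = topspace X"
    using assms(2) by simp
  fix V assume "V \<in> U ` I"
  then obtain i where iI: "i \<in> I" and V: "V = U i"
    by blast
  interpret chart G X I U xx ee i
    by unfold_locales (fact iI)
  show "\<exists>\<psi>0 \<psi>1 \<phi>0 \<phi>1 \<epsilon>. trivializing_chart G X P \<pi>c0 \<pi>c1 V \<psi>0 \<psi>1 \<phi>0 \<phi>1 \<epsilon>"
    using trivializing_chart assms(1) iI unfolding V by blast
qed

theorem lemma5:
  fixes G :: "('g0, 'g1) twogrp" and X :: "'x topology"
    and I :: "'i set" and U :: "'i \<Rightarrow> 'x set"
    and xx :: "'i \<Rightarrow> 'i \<Rightarrow> 'x \<Rightarrow> 'g0" and ee :: "'i \<Rightarrow> 'i \<Rightarrow> 'i \<Rightarrow> 'x \<Rightarrow> 'g1"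
  assumes "topological_2group G"
    and "\<forall>i \<in> I. openin X (U i)"
    and "(\<Union>i \<in> I. U i) = topspace X"
    and "cech_cocycle G X I U xx ee"
  shows "principal_bundle G X (Pc G X I U xx ee) \<pi>c0 \<pi>c1 \<and>
         trivializing_cover G X (Pc G X I U xx ee) \<pi>c0 \<pi>c1 (U ` I)"
proof -
  interpret cocycle G X I U xx ee
    by (intro cocycle.intro two_group.intro cocycle_axioms.intro) (fact assms(1), fact assms(4))
  have "trivializing_cover G X P \<pi>c0 \<pi>c1 (U ` I)"
    using Pc_trivializing_cover assms(2,3) .
  then show ?thesis
    unfolding principal_bundle_def using Pc_G_2space Pc_projection_functor by blast
qed

end
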